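(* Let $K\in\mathbb{K}$, $\Psi_i=R_i+B_i^T\mathcal{E}_i(P^K)B_i$, and $K'=K-2\eta\Psi^{-1}L^K$ (i.e. $K_i'=K_i-2\eta\Psi_i^{-1}L_i^K$) with $0<\eta\le\frac12$. Then $$C(K')-C(K^* )\le\Big(1-\frac{2\mu}{\|\mathbf{X}^{K^*}\|_{\max}}\eta\Big)\big(C(K)-C(K^* )\big).$$
   Context: Let $N_s\ge 1$, $\Omega=\{1,\dots,N_s\}$; tuples $V=(V_1,\dots,V_{N_s})$ of matrices are combined componentwise, $\|V\|_{\max}=\max_i\|V_i\|$ (spectral norm). Markovian jump linear system: $x_{t+1}=A_{\omega(t)}x_t+B_{\omega(t)}u_t$, $A_i\in\mathbb{R}^{d\times d}$, $B_i\in\mathbb{R}^{d\times k}$; $\{\omega(t)\}$ is a time-homogeneous Markov chain on $\Omega$ with transition probabilities $p_{ij}$ and initial distribution $\pi$ with $\pi_i>0$; $x_0$ is random, independent of the chain, with $\mathbb{E}[x_0x_0^T]\succ0$. The system is mean-square stabilizable. $Q=(Q_i)\succ0$, $R=(R_i)\succ0$. For $K=(K_i)$, $K_i\in\mathbb{R}^{k\times d}$, $u_t=-K_{\omega(t)}x_t$ and $C(K)=\mathbb{E}[\sum_{t\ge0}x_t^TQ_{\omega(t)}x_t+u_t^TR_{\omega(t)}u_t]$. $\mathbb{K}$ is the set of $K$ making the closed loop $x_{t+1}=\Gamma_{\omega(t)}x_t$, $\Gamma_i=A_i-B_iK_i$, mean-square stable (equivalently $C(K)<\infty$). $K^*$ is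 the optimal gain minimizing $C$ over $\mathbb{K}$. $\mathcal{E}_i(V)=\sum_jp_{ij}V_j$; $\mathcal{T}_j(V)=\sum_ip_{ij}\Gamma_iV_i\Gamma_i^T$. For $K\in\mathbb{K}$: $P^K$ solves $P_i^K=Q_i+K_i^TR_iK_i+\Gamma_i^T\mathcal{E}_i(P^K)\Gamma_i$; $L_i^K=(R_i+B_i^T\mathcal{E}_i(P^K)B_i)K_i-B_i^T\mathcal{E}_i(P^K)A_i$; $X_i(0)=\mathbb{E}[x_0x_0^T\mathbf{1}\{\omega(0)=i\}]$, $\mathbf{X}^K=\sum_{t\ge0}\mathcal{T}^t(X(0))$. $\mu=\min_i\pi_i\,\sigma_{\min}(\mathbb{E}[x_0x_0^T])$. *)

theory Defs
  imports "HOL-Analysis.Analysis" "HOL-Probability.Probability"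
begin

(* Modes: a finite type 's (Omega = {1..N_s}, N_s >= 1). State dim 'd, input dim 'k.
   Tuples V = (V_i) are functions 's => matrix. *)

definition posdef :: "real^'n^'n \<Rightarrow> bool" where
  "posdef S \<longleftrightarrow> transpose S = S \<and> (\<forall>v. v \<noteq> 0 \<longrightarrow> v \<bullet> (S *v v) > 0)"

definition specnorm :: "real^'n^'m \<Rightarrow> real" where
  "specnorm S = onorm (\<lambda>v. S *v v)"

definition sigma_min :: "real^'n^'m \<Rightarrow> real" where
  "sigma_min S = Inf {norm (S *v v) | v. norm v = 1}"

definition maxnorm :: "('s::finite \<Rightarrow> real^'n^'m) \<Rightarrow> real" where
  "maxnorm V = Max (range (\<lambda>i. specnorm (V i)))"

definition Gam :: "('s \<Rightarrow> real^'d^'d) \<Rightarrow> ('s \<Rightarrow> real^'k^'d) \<Rightarrow> ('s \<Rightarrow> real^'d^'k)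
    \<Rightarrow> 's \<Rightarrow> real^'d^'d" where
  "Gam A B K i = A i - B i ** K i"

definition Eop :: "('s::finite \<Rightarrow> 's \<Rightarrow> real) \<Rightarrow> ('s \<Rightarrow> real^'d^'d) \<Rightarrow> 's \<Rightarrow> real^'d^'d" where
  "Eop p V i = (\<Sum>j\<in>UNIV. p i j *\<^sub>R V j)"

definition Top :: "('s::finite \<Rightarrow> 's \<Rightarrow> real) \<Rightarrow> ('s \<Rightarrow> real^'d^'d) \<Rightarrow> ('s \<Rightarrow> real^'d^'d)
    \<Rightarrow> 's \<Rightarrow> real^'d^'d" where
  "Top p G V j = (\<Sum>i\<in>UNIV. p i j *\<^sub>R (G i ** V i ** transpose (G i)))"

definition paths :: "nat \<Rightarrow> ('s::finite) list set" where
  "paths t = {ws. length ws = Suc t}"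

definition path_weight :: "('s \<Rightarrow> 's \<Rightarrow> real) \<Rightarrow> ('s \<Rightarrow> real) \<Rightarrow> 's list \<Rightarrow> real" where
  "path_weight p d ws = d (ws ! 0) * (\<Prod>s<length ws - 1. p (ws ! s) (ws ! Suc s))"

primrec traj :: "('s \<Rightarrow> real^'d^'d) \<Rightarrow> 's list \<Rightarrow> real^'d \<Rightarrow> nat \<Rightarrow> real^'d" where
  "traj G ws x 0 = x"
| "traj G ws x (Suc n) = G (ws ! n) *v traj G ws x n"

definition ms_stable :: "('s::finite \<Rightarrow> 's \<Rightarrow> real) \<Rightarrow> ('s \<Rightarrow> real^'d^'d) \<Rightarrow> bool" where
  "ms_stable p G \<longleftrightarrow> (\<forall>d x. (\<forall>i. d i \<ge> 0) \<and> sum d UNIV = 1 \<longrightarrow>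
      (\<lambda>t. \<Sum>ws\<in>paths t. path_weight p d ws * (norm (traj G ws x t))\<^sup>2) \<longlonglongrightarrow> 0)"

definition stab_set :: "('s::finite \<Rightarrow> 's \<Rightarrow> real) \<Rightarrow> ('s \<Rightarrow> real^'d^'d) \<Rightarrow> ('s \<Rightarrow> real^'k^'d)
    \<Rightarrow> ('s \<Rightarrow> real^'d^'k) set" where
  "stab_set p A B = {K. ms_stable p (Gam A B K)}"

(* cost C(K) = E[sum_t x_t^T Q x_t + u_t^T R u_t], u_t = -K x_t; the expectation is over the
   Markov chain (initial law pini, transitions p) and the independent random x0 on (M). *)
definition mjls_cost :: "'a measure \<Rightarrow> ('a \<Rightarrow> real^'d) \<Rightarrow> ('s::finite \<Rightarrow> real) \<Rightarrow> ('s \<Rightarrow> 's \<Rightarrow> real)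
   \<Rightarrow> ('s \<Rightarrow> real^'d^'d) \<Rightarrow> ('s \<Rightarrow> real^'k^'d) \<Rightarrow> ('s \<Rightarrow> real^'d^'d) \<Rightarrow> ('s \<Rightarrow> real^'k^'k)
   \<Rightarrow> ('s \<Rightarrow> real^'d^'k) \<Rightarrow> ereal" where
  "mjls_cost M x0 pini p A B Q R K =
     (\<Sum>t. ereal (\<Sum>ws\<in>paths t. path_weight p pini ws *
        (\<integral>w. (let x = traj (Gam A B K) ws (x0 w) t; u = - (K (ws ! t) *v x)
               in x \<bullet> (Q (ws ! t) *v x) + u \<bullet> (R (ws ! t) *v u)) \<partial>M)))"

definition PK :: "('s::finite \<Rightarrow> 's \<Rightarrow> real) \<Rightarrow> ('s \<Rightarrow> real^'d^'d) \<Rightarrow> ('s \<Rightarrow> real^'k^'d)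
   \<Rightarrow> ('s \<Rightarrow> real^'d^'d) \<Rightarrow> ('s \<Rightarrow> real^'k^'k) \<Rightarrow> ('s \<Rightarrow> real^'d^'k) \<Rightarrow> 's \<Rightarrow> real^'d^'d" where
  "PK p A B Q R K = (THE P. \<forall>i. P i = Q i + transpose (K i) ** R i ** K i
        + transpose (Gam A B K i) ** Eop p P i ** Gam A B K i)"

definition LK :: "('s::finite \<Rightarrow> 's \<Rightarrow> real) \<Rightarrow> ('s \<Rightarrow> real^'d^'d) \<Rightarrow> ('s \<Rightarrow> real^'k^'d)
   \<Rightarrow> ('s \<Rightarrow> real^'d^'d) \<Rightarrow> ('s \<Rightarrow> real^'k^'k) \<Rightarrow> ('s \<Rightarrow> real^'d^'k) \<Rightarrow> 's \<Rightarrow> real^'d^'k" where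
  "LK p A B Q R K i = (let EP = Eop p (PK p A B Q R K) i in
      (R i + transpose (B i) ** EP ** B i) ** K i - transpose (B i) ** EP ** A i)"

definition second_moment :: "'a measure \<Rightarrow> ('a \<Rightarrow> real^'d) \<Rightarrow> real^'d^'d" where
  "second_moment M x0 = (\<chi> i j. \<integral>w. x0 w $ i * x0 w $ j \<partial>M)"

(* X_i(0) = E[x0 x0^T 1{omega(0)=i}] = pi_i E[x0 x0^T]  (x0 independent of the chain) *)
definition X0 :: "'a measure \<Rightarrow> ('a \<Rightarrow> real^'d) \<Rightarrow> ('s \<Rightarrow> real) \<Rightarrow> 's \<Rightarrow> real^'d^'d" where
  "X0 M x0 pini i = pini i *\<^sub>R second_moment M x0"

definition XK :: "'a measure \<Rightarrow> ('a \<Rightarrow> real^'d) \<Rightarrow> ('s::finite \<Rightarrow> real) \<Rightarrow> ('s \<Rightarrow> 's \<Rightarrow> real)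
   \<Rightarrow> ('s \<Rightarrow> real^'d^'d) \<Rightarrow> ('s \<Rightarrow> real^'k^'d) \<Rightarrow> ('s \<Rightarrow> real^'d^'k) \<Rightarrow> 's \<Rightarrow> real^'d^'d" where
  "XK M x0 pini p A B K i = (\<Sum>t. ((Top p (Gam A B K) ^^ t) (X0 M x0 pini)) i)"

definition mu_const :: "'a measure \<Rightarrow> ('a \<Rightarrow> real^'d) \<Rightarrow> ('s::finite \<Rightarrow> real) \<Rightarrow> real" where
  "mu_const M x0 pini = Min (range pini) * sigma_min (second_moment M x0)"

end

theory Submission
  imports Defs
begin

text \<open>
  Write P for P^K, L for L^K and D_i = L_i^T Psi_i^-1 L_i. For a gain K' with closed loop
  Gamma' = A - B K', the advantage matrix Q + K'^T R K' + L_{K'}(P) - P, where L_{K'} is the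
  adjoint of the operator T of Gamma', telescopes along the closed loop of K':
  C(K') = E[x_0^T P x_0] + sum_t E[x_t^T (advantage) x_t]. Completing the square in K' x shows
  that the advantage is at least -D, with equality -4 eta (1 - eta) D for the natural gradient
  step. Along the loop of K* this gives C(K) - C(K*) <= sum_i <D_i, X^{K*}_i>
  <= ||X^{K*}||_max tr D, along the loop of K' it gives C(K) - C(K') >= 4 eta (1 - eta) E[x_0^T D x_0]
  >= 2 eta mu tr D, and the two estimates combine to the contraction.
\<close>

section \<open>Quadratic forms and positive semidefinite matrices\<close>

definition sym_mat :: "real^'n^'n \<Rightarrow> bool" where
  "sym_mat S \<longleftrightarrow> transpose S = S"

definition psd_mat :: "real^'n^'n \<Rightarrow> bool" where
  "psd_mat S \<longleftrightarrow> (\<forall>x. 0 \<le> x \<bullet> (S *v x))"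

definition outer :: "real^'n \<Rightarrow> real^'n \<Rightarrow> real^'n^'n" where
  "outer u v = (\<chi> a b. u$a * v$b)"

definition frob :: "real^'n^'m \<Rightarrow> real^'n^'m \<Rightarrow> real" where
  "frob X Y = (\<Sum>a\<in>UNIV. \<Sum>b\<in>UNIV. X$a$b * Y$a$b)"

lemma transpose_add: "transpose (X + Y) = transpose X + transpose (Y::real^'n^'m)"
  by (simp add: transpose_def vec_eq_iff)

lemma inner_transpose_mv: "(x::real^'m) \<bullet> (transpose X *v y) = (X *v x) \<bullet> y"
  by (metis dot_lmul_matrix inner_commute transpose_matrix_vector)

lemma inner_conj_mv:
  fixes X :: "real^'n^'m" and C :: "real^'m^'m" and Y :: "real^'p^'m"
  shows "u \<bullet> ((transpose X ** C ** Y) *v w) = (X *v u) \<bullet> (C *v (Y *v w))"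
proof -
  have "(transpose X ** C ** Y) *v w = transpose X *v (C *v (Y *v w))"
    by (metis matrix_vector_mul_assoc)
  thus ?thesis by (simp only: inner_transpose_mv)
qed

lemma inner_mv_transpose: "u \<bullet> (transpose X *v w) = w \<bullet> ((X::real^'n^'n) *v u)"
  by (metis inner_transpose_mv inner_commute)

lemma sym_mat_swap: "sym_mat S \<Longrightarrow> (x::real^'n) \<bullet> (S *v y) = y \<bullet> (S *v x)"
  unfolding sym_mat_def by (metis inner_mv_transpose)

lemma matrix_eq_inner:
  fixes X Y :: "real^'n^'m"
  assumes "\<And>u w. u \<bullet> (X *v w) = u \<bullet> (Y *v w)"
  shows "X = Y"
proof (subst matrix_eq, intro allI)
  fix w
  have "(X *v w - Y *v w) \<bullet> (X *v w - Y *v w) = 0"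
    using assms[of "X *v w - Y *v w" w] by (simp add: inner_diff_right)
  thus "X *v w = Y *v w" by simp
qed

lemma two_abs_inner_le: "2 * \<bar>(u::'a::real_inner) \<bullet> v\<bar> \<le> u \<bullet> u + v \<bullet> v"
proof -
  have "0 \<le> (u - v) \<bullet> (u - v)" "0 \<le> (u + v) \<bullet> (u + v)" by simp_all
  thus ?thesis by (simp add: inner_diff_left inner_diff_right inner_add_left inner_add_right inner_commute abs_le_iff)
qed

lemma qf_expand: "(x::real^'n) \<bullet> (X *v x) = (\<Sum>a\<in>UNIV. \<Sum>b\<in>UNIV. X$a$b * (x$a * x$b))"
  by (simp add: inner_vec_def matrix_vector_mult_def sum_distrib_left mult_ac)

lemma inner_axis_mv_axis: "axis a 1 \<bullet> ((X::real^'n^'m) *v axis b 1) = X$a$b"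
proof -
  have "(X *v axis b 1) $ a = X $ a $ b"
    by (simp add: matrix_vector_mult_def axis_def mult.commute if_distrib[of "\<lambda>z. _ * z"] cong: if_cong)
  thus ?thesis by (simp add: inner_axis')
qed

lemma qf_le_entries: "(x::real^'n) \<bullet> (X *v x) \<le> (\<Sum>a\<in>UNIV. \<Sum>b\<in>UNIV. \<bar>X$a$b\<bar>) * (x \<bullet> x)"
proof -
  have "X$a$b * (x$a * x$b) \<le> \<bar>X$a$b\<bar> * (x \<bullet> x)" for a b
  proof -
    have "\<bar>x$a\<bar> * \<bar>x$b\<bar> \<le> norm x * norm x"
      by (intro mult_mono component_le_norm_cart) auto
    hence "\<bar>x$a * x$b\<bar> \<le> x \<bullet> x" by (simp add: abs_mult power2_norm_eq_inner[symmetric] power2_eq_square)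
    hence "\<bar>X$a$b\<bar> * \<bar>x$a * x$b\<bar> \<le> \<bar>X$a$b\<bar> * (x \<bullet> x)" by (intro mult_left_mono) auto
    thus ?thesis by (metis abs_ge_self abs_mult order_trans)
  qed
  hence "x \<bullet> (X *v x) \<le> (\<Sum>a\<in>UNIV. \<Sum>b\<in>UNIV. \<bar>X$a$b\<bar> * (x \<bullet> x))"
    unfolding qf_expand by (intro sum_mono)
  thus ?thesis by (simp add: sum_distrib_right)
qed

lemma psd_mat_qf_eq_0_imp_mv_eq_0:
  fixes S :: "real^'n^'n"
  assumes "sym_mat S" "psd_mat S" "v \<bullet> (S *v v) = 0"
  shows "S *v v = 0"
proof -
  have "w \<bullet> (S *v v) = 0" for w
  proof -
    define a where "a = w \<bullet> (S *v v)"
    define b where "b = w \<bullet> (S *v w)"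
    have b0: "b \<ge> 0" using assms(2) unfolding psd_mat_def b_def by auto
    define t where "t = - a / (b + 1)"
    have "0 \<le> (v + t *\<^sub>R w) \<bullet> (S *v (v + t *\<^sub>R w))" using assms(2) unfolding psd_mat_def by auto
    also have "\<dots> = 2 * t * a + t * t * b"
      using assms(3) sym_mat_swap[OF assms(1), of v w] unfolding a_def b_def
      by (simp add: algebra_simps)
    finally have h: "0 \<le> 2 * t * a + t * t * b" .
    have e: "(b + 1) * t = - a" unfolding t_def using b0 by simp
    have "0 \<le> (b + 1) * (b + 1) * (2 * t * a + t * t * b)" using h b0 by simp
    also have "\<dots> = 2 * ((b + 1) * t) * (b + 1) * a + ((b + 1) * t) * ((b + 1) * t) * b"
      by (simp add: algebra_simps)
    also have "\<dots> = - a * a * (b + 2)" unfolding e by (simp add: algebra_simps)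
    finally have "a * a * (b + 2) \<le> 0" by simp
    hence "a * a \<le> 0" using b0 by (simp add: mult_le_0_iff)
    thus ?thesis unfolding a_def by (simp add: mult_le_0_iff) linarith
  qed
  from this[of "S *v v"] show ?thesis by simp
qed

lemma sym_mat_min_eigenvector:
  fixes S :: "real^'n^'n"
  assumes "sym_mat S"
  obtains v where "norm v = 1" "S *v v = (v \<bullet> (S *v v)) *\<^sub>R v"
    "\<And>w. (v \<bullet> (S *v v)) * (w \<bullet> w) \<le> w \<bullet> (S *v w)"
proof -
  have "sphere (0::real^'n) 1 \<noteq> {}" using norm_axis_1[of undefined] by (metis mem_sphere_0 empty_iff)
  moreover have "continuous_on (sphere 0 1) (\<lambda>v::real^'n. v \<bullet> (S *v v))" by (intro continuous_intros)
  ultimately obtain v where v: "v \<in> sphere 0 1" and vmin: "\<forall>y\<in>sphere 0 1. v \<bullet> (S *v v) \<le> y \<bullet> (S *v y)"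
    using continuous_attains_inf[OF compact_sphere] by blast
  define l where "l = v \<bullet> (S *v v)"
  have nv: "norm v = 1" using v by simp
  have bound: "l * (w \<bullet> w) \<le> w \<bullet> (S *v w)" for w
  proof (cases "w = 0")
    case False
    define u where "u = (1 / norm w) *\<^sub>R w"
    have "u \<in> sphere 0 1" using False unfolding u_def by simp
    hence "l \<le> u \<bullet> (S *v u)" using vmin unfolding l_def by blast
    also have "u \<bullet> (S *v u) = (w \<bullet> (S *v w)) / (norm w)^2"
      unfolding u_def by (simp add: matrix_vector_mult_scaleR power2_eq_square)
    finally show ?thesis using False by (simp add: field_simps power2_norm_eq_inner)
  qed simp
  define T where "T = S - l *\<^sub>R mat 1"
  have Tv: "T *v w = S *v w - l *\<^sub>R w" for w
    unfolding T_def by (simp add: matrix_vector_mult_diff_rdistrib scaleR_matrix_vector_assoc[symmetric])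
  have "sym_mat T" using assms unfolding T_def sym_mat_def by (simp add: transpose_def vec_eq_iff mat_def)
  moreover have "psd_mat T" unfolding psd_mat_def Tv using bound by (simp add: inner_diff_right)
  moreover have "v \<bullet> (T *v v) = 0"
    unfolding Tv l_def using nv by (simp add: inner_diff_right power2_norm_eq_inner[symmetric])
  ultimately have "T *v v = 0" by (rule psd_mat_qf_eq_0_imp_mv_eq_0)
  hence "S *v v = l *\<^sub>R v" unfolding Tv by simp
  with nv bound show ?thesis using that unfolding l_def by blast
qed

lemma psd_mat_nonzero_eigenvector:
  fixes S :: "real^'n^'n"
  assumes "sym_mat S" "psd_mat S" "S \<noteq> 0"
  obtains v l where "v \<bullet> v = 1" "0 < l" "S *v v = l *\<^sub>R v"
proof -
  have neg: "(- S) *v w = - (S *v w)" for w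
    by (simp add: matrix_vector_mult_def vec_eq_iff sum_negf)
  have "sym_mat (- S)" using assms(1) unfolding sym_mat_def by (simp add: transpose_def vec_eq_iff)
  then obtain v where nv: "norm v = 1" and ev: "(- S) *v v = (v \<bullet> ((- S) *v v)) *\<^sub>R v"
    and bd: "\<And>w. (v \<bullet> ((- S) *v v)) * (w \<bullet> w) \<le> w \<bullet> ((- S) *v w)"
    using sym_mat_min_eigenvector by blast
  define l where "l = v \<bullet> (S *v v)"
  have Sv: "S *v v = l *\<^sub>R v" using ev unfolding neg l_def by simp
  have max: "w \<bullet> (S *v w) \<le> l * (w \<bullet> w)" for w
    using bd[of w] unfolding neg l_def by simp
  have "l \<noteq> 0"
  proof
    assume "l = 0"
    hence "w \<bullet> (S *v w) = 0" for w using max[of w] assms(2) unfolding psd_mat_def by (simp add: order_antisym)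
    hence "S *v w = 0" for w using psd_mat_qf_eq_0_imp_mv_eq_0[OF assms(1,2)] by blast
    hence "S = 0" by (subst matrix_eq) simp
    with assms(3) show False ..
  qed
  moreover have "0 \<le> l" using assms(2) unfolding psd_mat_def l_def by auto
  moreover have "v \<bullet> v = 1" using nv by (simp add: power2_norm_eq_inner[symmetric])
  ultimately show ?thesis using that[of v l] Sv by simp
qed

lemma outer_mv: "outer u v *v x = (v \<bullet> x) *\<^sub>R u"
  by (simp add: outer_def matrix_vector_mult_def inner_vec_def vec_eq_iff sum_distrib_left mult_ac)

lemma psd_mat_deflate:
  fixes S :: "real^'n^'n"
  assumes sym: "sym_mat S" and psd: "psd_mat S" and v: "v \<bullet> v = 1" "0 < l" "S *v v = l *\<^sub>R v"
  defines "T \<equiv> S - l *\<^sub>R outer v v"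
  shows "sym_mat T" "psd_mat T" "range ((*v) T) \<subset> range ((*v) S)"
proof -
  have Tx: "T *v x = S *v x - (v \<bullet> x) *\<^sub>R (l *\<^sub>R v)" for x
    unfolding T_def by (simp add: matrix_vector_mult_diff_rdistrib scaleR_matrix_vector_assoc[symmetric] outer_mv)
  show symT: "sym_mat T"
    using sym unfolding T_def sym_mat_def by (simp add: outer_def transpose_def vec_eq_iff mult.commute)
  show "psd_mat T" unfolding psd_mat_def
  proof
    fix w
    define c where "c = v \<bullet> w"
    define u where "u = w - c *\<^sub>R v"
    have "v \<bullet> u = 0" using v(1) unfolding u_def c_def by (simp add: inner_diff_right)
    hence uv: "u \<bullet> v = 0" by (simp add: inner_commute)
    have vSu: "v \<bullet> (S *v u) = 0" using sym_mat_swap[OF sym, of v u] v(3) uv by simp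
    have w: "w = u + c *\<^sub>R v" unfolding u_def by simp
    have "w \<bullet> (S *v w) = u \<bullet> (S *v u) + c * c * l"
      unfolding w
      by (simp add: matrix_vector_right_distrib matrix_vector_mult_scaleR inner_add_left inner_add_right
          v uv vSu inner_commute[of u v])
    moreover have "u \<bullet> (S *v u) \<ge> 0" using psd unfolding psd_mat_def by auto
    ultimately show "0 \<le> w \<bullet> (T *v w)" unfolding Tx c_def by (simp add: inner_diff_right inner_commute)
  qed
  have "T *v x = S *v (x - (v \<bullet> x) *\<^sub>R v)" for x
    unfolding Tx by (simp add: matrix_vector_mult_diff_distrib matrix_vector_mult_scaleR v(3))
  hence "range ((*v) T) \<subseteq> range ((*v) S)" by auto
  moreover have "v \<in> range ((*v) S)"
    using v by (intro range_eqI[of _ _ "(1 / l) *\<^sub>R v"]) (simp add: matrix_vector_mult_scaleR)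
  moreover have "v \<notin> range ((*v) T)"
  proof
    assume "v \<in> range ((*v) T)"
    then obtain y where y: "v = T *v y" by auto
    have "T *v v = 0" unfolding Tx v by simp
    hence "y \<bullet> (T *v v) = 0" by simp
    also have "y \<bullet> (T *v v) = v \<bullet> v" using sym_mat_swap[OF symT, of y v] y by simp
    finally show False using v(1) by simp
  qed
  ultimately show "range ((*v) T) \<subset> range ((*v) S)" by blast
qed

(* Induction on the rank: removing l v v^T for an eigenpair with l > 0 keeps S symmetric and
   positive semidefinite and shrinks its range. *)
lemma psd_mat_sum_outer:
  fixes S :: "real^'n^'n"
  assumes "sym_mat S" "psd_mat S"
  shows "\<exists>ms. S = sum_list (map (\<lambda>m. outer m m) ms)"
  using assms
proof (induction "dim (range ((*v) S))" arbitrary: S rule: less_induct)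
  case less
  show ?case
  proof (cases "S = 0")
    case False
    obtain v l where v: "v \<bullet> v = 1" "0 < l" "S *v v = l *\<^sub>R v"
      using psd_mat_nonzero_eigenvector[OF less.prems False] .
    define T where "T = S - l *\<^sub>R outer v v"
    note T = psd_mat_deflate[OF less.prems v, folded T_def]
    have span: "span (range ((*v) X)) = range ((*v) X)" for X :: "real^'n^'n"
      using linear_subspace_image[OF matrix_vector_mul_linear subspace_UNIV] by simp
    have "span (range ((*v) T)) \<subset> span (range ((*v) S))" unfolding span by (rule T(3))
    hence "dim (range ((*v) T)) < dim (range ((*v) S))" by (rule dim_psubset)
    then obtain ms where ms: "T = sum_list (map (\<lambda>m. outer m m) ms)" using less.hyps T(1,2) by blast
    have "outer (sqrt l *\<^sub>R v) (sqrt l *\<^sub>R v) = l *\<^sub>R outer v v"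
      unfolding outer_def using v(2) by (simp add: vec_eq_iff)
    hence "S = sum_list (map (\<lambda>m. outer m m) (sqrt l *\<^sub>R v # ms))" by (simp add: ms[symmetric] T_def)
    thus ?thesis ..
  qed (auto intro: exI[of _ "[]"])
qed

lemma frob_add_left: "frob (X + Y) Z = frob X Z + frob Y Z"
  by (simp add: frob_def sum.distrib[symmetric] algebra_simps)

lemma frob_zero_left [simp]: "frob 0 Z = 0"
  by (simp add: frob_def)

lemma frob_zero_right [simp]: "frob Z 0 = 0"
  by (simp add: frob_def)

lemma frob_scaleR_left: "frob (c *\<^sub>R X) Z = c * frob X Z"
  by (simp add: frob_def sum_distrib_left algebra_simps)

lemma frob_scaleR_right: "frob Z (c *\<^sub>R X) = c * frob Z X"
  by (simp add: frob_def sum_distrib_left algebra_simps)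

lemma frob_sum_left: "frob (\<Sum>j\<in>J. f j) Z = (\<Sum>j\<in>J. frob (f j) Z)"
  by (induction J rule: infinite_finite_induct) (auto simp: frob_add_left)

lemma frob_add_right: "frob Z (X + Y) = frob Z X + frob Z Y"
  by (simp add: frob_def sum.distrib[symmetric] algebra_simps)

lemma frob_sum_right: "frob Z (\<Sum>j\<in>J. f j) = (\<Sum>j\<in>J. frob Z (f j))"
  by (induction J rule: infinite_finite_induct) (auto simp: frob_add_right)

lemma frob_outer: "frob (outer u v) X = u \<bullet> (X *v v)"
  by (simp add: frob_def outer_def inner_vec_def matrix_vector_mult_def sum_distrib_left mult_ac)

lemma frob_psd_mat_mono:
  assumes "sym_mat S" "psd_mat S" "\<And>m. m \<bullet> (X *v m) \<le> m \<bullet> (Y *v m)"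
  shows "frob S X \<le> frob S Y"
proof -
  obtain ms where ms: "S = sum_list (map (\<lambda>m. outer m m) ms)" using psd_mat_sum_outer[OF assms(1,2)] ..
  have "frob S Z = sum_list (map (\<lambda>m. m \<bullet> (Z *v m)) ms)" for Z
    unfolding ms by (induction ms) (simp_all add: frob_add_left frob_outer)
  thus ?thesis by (simp add: sum_list_mono assms(3))
qed

lemma inner_scaleR_mv: "x \<bullet> ((c *\<^sub>R X) *v y) = c * (x \<bullet> ((X::real^'n^'m) *v y))"
  by (simp flip: scaleR_matrix_vector_assoc)

lemma frob_psd_mat_nonneg: "sym_mat S \<Longrightarrow> psd_mat S \<Longrightarrow> 0 \<le> frob S (mat 1)"
  using frob_psd_mat_mono[of S "0 *\<^sub>R mat 1" "mat 1"] by (simp add: inner_scaleR_mv frob_scaleR_right)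

lemma posdef_sym_mat: "posdef S \<Longrightarrow> sym_mat S"
  unfolding posdef_def sym_mat_def by simp

lemma posdef_psd_mat: "posdef S \<Longrightarrow> psd_mat S"
  unfolding posdef_def psd_mat_def by (metis inner_zero_left order.strict_implies_order order_refl)

lemma posdef_matrix_inv:
  fixes S :: "real^'n^'n"
  assumes "posdef S"
  shows "S ** matrix_inv S = mat 1" "matrix_inv S ** S = mat 1"
proof -
  have "inj ((*v) S)"
  proof (rule injI)
    fix x y assume "S *v x = S *v y"
    hence "(x - y) \<bullet> (S *v (x - y)) = 0" by (simp add: matrix_vector_mult_diff_distrib)
    with assms show "x = y" unfolding posdef_def by (metis less_irrefl right_minus_eq)
  qed
  then obtain S' where "S' ** S = mat 1" using matrix_left_invertible_injective by blast
  hence "\<exists>S'. S ** S' = mat 1 \<and> S' ** S = mat 1" using matrix_left_right_inverse by blast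
  hence "S ** matrix_inv S = mat 1 \<and> matrix_inv S ** S = mat 1"
    unfolding matrix_inv_def by (rule someI_ex)
  thus "S ** matrix_inv S = mat 1" "matrix_inv S ** S = mat 1" by simp_all
qed

lemma sym_mat_matrix_inv:
  assumes "posdef S"
  shows "sym_mat (matrix_inv S)"
proof -
  note inv = posdef_matrix_inv[OF assms]
  have "transpose (matrix_inv S) ** S = mat 1"
    using arg_cong[OF inv(1), of transpose] posdef_sym_mat[OF assms]
    by (simp add: matrix_transpose_mul sym_mat_def)
  hence "transpose (matrix_inv S) = transpose (matrix_inv S) ** (S ** matrix_inv S)"
    by (simp add: inv(1))
  also have "\<dots> = matrix_inv S"
    by (simp add: matrix_mul_assoc \<open>transpose (matrix_inv S) ** S = mat 1\<close>)
  finally show ?thesis unfolding sym_mat_def .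
qed

lemma sigma_min_le_qf:
  fixes S :: "real^'n^'n"
  assumes "posdef S"
  shows "0 \<le> sigma_min S" "sigma_min S * (m \<bullet> m) \<le> m \<bullet> (S *v m)"
proof -
  obtain v where nv: "norm v = 1" and ev: "S *v v = (v \<bullet> (S *v v)) *\<^sub>R v"
    and bd: "\<And>w. (v \<bullet> (S *v v)) * (w \<bullet> w) \<le> w \<bullet> (S *v w)"
    using sym_mat_min_eigenvector[OF posdef_sym_mat[OF assms]] by blast
  have "0 \<le> v \<bullet> (S *v v)" using posdef_psd_mat[OF assms] unfolding psd_mat_def by blast
  hence "norm (S *v v) = v \<bullet> (S *v v)" by (subst ev) (simp add: nv)
  moreover have "sigma_min S \<le> norm (S *v v)" unfolding sigma_min_def
    by (rule cInf_lower) (use nv in \<open>auto intro: bdd_belowI[of _ 0]\<close>)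
  ultimately have "sigma_min S * (m \<bullet> m) \<le> (v \<bullet> (S *v v)) * (m \<bullet> m)" by (simp add: mult_right_mono)
  thus "sigma_min S * (m \<bullet> m) \<le> m \<bullet> (S *v m)" using bd[of m] by linarith
  show "0 \<le> sigma_min S" unfolding sigma_min_def
    by (rule cInf_greatest) (use nv in auto)
qed

lemma qf_le_specnorm: "m \<bullet> ((X::real^'n^'n) *v m) \<le> specnorm X * (m \<bullet> m)"
proof -
  have "m \<bullet> (X *v m) \<le> norm m * norm (X *v m)" using Cauchy_Schwarz_ineq2[of m "X *v m"] by simp
  also have "\<dots> \<le> norm m * (specnorm X * norm m)"
    unfolding specnorm_def by (rule mult_left_mono[OF onorm[OF matrix_vector_mul_bounded_linear]]) simp
  also have "\<dots> = specnorm X * (m \<bullet> m)" by (simp add: power2_norm_eq_inner[symmetric] power2_eq_square mult_ac)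
  finally show ?thesis .
qed

lemma specnorm_le_maxnorm: "specnorm (V i) \<le> maxnorm (V::'s::finite \<Rightarrow> real^'n^'m)"
  unfolding maxnorm_def by (rule Max_ge) auto

lemma maxnorm_nonneg: "0 \<le> maxnorm (V::'s::finite \<Rightarrow> real^'n^'m)"
  by (rule order_trans[OF _ specnorm_le_maxnorm[of V undefined]]) (simp add: specnorm_def onorm_pos_le)

lemma frob_le_specnorm_trace:
  assumes "sym_mat S" "psd_mat S"
  shows "frob S X \<le> specnorm X * frob S (mat 1)"
  using frob_psd_mat_mono[OF assms, of X "specnorm X *\<^sub>R mat 1"]
  by (simp add: qf_le_specnorm inner_scaleR_mv frob_scaleR_right)

lemma sigma_min_trace_le_frob:
  assumes "sym_mat S" "psd_mat S" "posdef Y"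
  shows "sigma_min Y * frob S (mat 1) \<le> frob S Y"
  using frob_psd_mat_mono[OF assms(1,2), of "sigma_min Y *\<^sub>R mat 1" Y]
  by (simp add: sigma_min_le_qf[OF assms(3)] inner_scaleR_mv frob_scaleR_right)

section \<open>The Lyapunov operator\<close>

(* The operator L_K of the paper: the adjoint of Top with respect to sum_i frob (V i) (Y i). *)
definition lyap :: "('s::finite \<Rightarrow> 's \<Rightarrow> real) \<Rightarrow> ('s \<Rightarrow> real^'d^'d) \<Rightarrow> ('s \<Rightarrow> real^'d^'d)
    \<Rightarrow> 's \<Rightarrow> real^'d^'d" where
  "lyap p G V i = transpose (G i) ** Eop p V i ** G i"

definition bilin_dominated :: "('s \<Rightarrow> real^'d^'d) \<Rightarrow> ('s \<Rightarrow> real^'d^'d) \<Rightarrow> bool" where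
  "bilin_dominated V W \<longleftrightarrow> (\<forall>j u v. 2 * \<bar>u \<bullet> (V j *v v)\<bar> \<le> u \<bullet> (W j *v u) + v \<bullet> (W j *v v))"

definition sum_onorm :: "('s::finite \<Rightarrow> real^'d^'d) \<Rightarrow> real" where
  "sum_onorm V = (\<Sum>j\<in>UNIV. onorm (\<lambda>x. V j *v x))"

definition geo_stable :: "('s::finite \<Rightarrow> 's \<Rightarrow> real) \<Rightarrow> ('s \<Rightarrow> real^'d^'d) \<Rightarrow> real \<Rightarrow> real \<Rightarrow> bool" where
  "geo_stable p G C r \<longleftrightarrow> 0 \<le> C \<and> 0 \<le> r \<and> r < 1 \<and>
     (\<forall>t i x. x \<bullet> ((lyap p G ^^ t) (\<lambda>j. mat 1) i *v x) \<le> C * r ^ t * (x \<bullet> x))"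

definition lyap_sum :: "('s::finite \<Rightarrow> 's \<Rightarrow> real) \<Rightarrow> ('s \<Rightarrow> real^'d^'d) \<Rightarrow> ('s \<Rightarrow> real^'d^'d)
    \<Rightarrow> 's \<Rightarrow> real^'d^'d" where
  "lyap_sum p G V i = (\<Sum>t. (lyap p G ^^ t) V i)"

lemma sum_matrix_vector_mult: "(\<Sum>j\<in>J. f j) *v y = (\<Sum>j\<in>J. f j *v y)"
  by (induction J rule: infinite_finite_induct) (auto simp: matrix_vector_mult_add_rdistrib)

lemma Eop_mv: "Eop p V i *v y = (\<Sum>j\<in>UNIV. p i j *\<^sub>R (V j *v y))"
  unfolding Eop_def sum_matrix_vector_mult by (simp add: scaleR_matrix_vector_assoc)

lemma inner_lyap: "u \<bullet> (lyap p G V i *v w) = (\<Sum>j\<in>UNIV. p i j * ((G i *v u) \<bullet> (V j *v (G i *v w))))"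
  unfolding lyap_def inner_conj_mv Eop_mv by (simp add: inner_sum_right)

lemma lyap_add: "lyap p G (\<lambda>j. V j + W j) = (\<lambda>i. lyap p G V i + lyap p G W i)"
  by (intro ext matrix_eq_inner)
     (simp add: inner_lyap sum.distrib[symmetric] algebra_simps)

lemma lyap_scaleR: "lyap p G (\<lambda>j. c *\<^sub>R V j) = (\<lambda>i. c *\<^sub>R lyap p G V i)"
  by (intro ext matrix_eq_inner)
     (simp add: inner_lyap scaleR_matrix_vector_assoc[symmetric] sum_distrib_left algebra_simps)

lemma lyap_diff: "lyap p G (\<lambda>j. V j - W j) = (\<lambda>i. lyap p G V i - lyap p G W i)"
  by (intro ext matrix_eq_inner)
     (simp add: inner_lyap sum_subtractf[symmetric] algebra_simps)

lemma lyap_pow_add: "(lyap p G ^^ t) (\<lambda>j. V j + W j) = (\<lambda>i. (lyap p G ^^ t) V i + (lyap p G ^^ t) W i)"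
  by (induction t) (simp_all add: lyap_add)

lemma lyap_pow_scaleR: "(lyap p G ^^ t) (\<lambda>j. c *\<^sub>R V j) = (\<lambda>i. c *\<^sub>R (lyap p G ^^ t) V i)"
  by (induction t) (simp_all add: lyap_scaleR)

lemma lyap_transpose: "transpose (lyap p G P i) = lyap p G (\<lambda>j. transpose (P j)) i"
  by (rule matrix_eq_inner) (simp only: inner_mv_transpose inner_lyap)

context
  fixes p :: "'s::finite \<Rightarrow> 's \<Rightarrow> real"
  assumes p_nonneg: "\<And>i j. 0 \<le> p i j"
begin

lemma lyap_pow_qf_mono:
  assumes "\<And>j x. x \<bullet> (V j *v x) \<le> x \<bullet> (W j *v x)"
  shows "x \<bullet> ((lyap p G ^^ t) V i *v x) \<le> x \<bullet> ((lyap p G ^^ t) W i *v x)"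
proof (induction t arbitrary: i x)
  case 0 then show ?case using assms by simp
next
  case (Suc t)
  show ?case unfolding funpow.simps o_apply inner_lyap
    by (rule sum_mono) (simp add: mult_left_mono p_nonneg Suc)
qed

lemma lyap_pow_qf_nonneg:
  assumes "\<And>j x. 0 \<le> x \<bullet> (V j *v x)"
  shows "0 \<le> x \<bullet> ((lyap p G ^^ t) V i *v x)"
proof (induction t arbitrary: i x)
  case 0 then show ?case using assms by simp
next
  case (Suc t)
  show ?case unfolding funpow.simps o_apply inner_lyap
    by (rule sum_nonneg) (simp add: p_nonneg Suc)
qed

lemma bilin_dominated_lyap_pow:
  assumes "bilin_dominated V W"
  shows "bilin_dominated ((lyap p G ^^ t) V) ((lyap p G ^^ t) W)"
proof (induction t)
  case (Suc t)
  let ?V = "(lyap p G ^^ t) V" and ?W = "(lyap p G ^^ t) W"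
  have "2 * \<bar>u \<bullet> (lyap p G ?V i *v v)\<bar> \<le> u \<bullet> (lyap p G ?W i *v u) + v \<bullet> (lyap p G ?W i *v v)" for i u v
  proof -
    have "2 * \<bar>u \<bullet> (lyap p G ?V i *v v)\<bar> \<le> (\<Sum>j\<in>UNIV. p i j * (2 * \<bar>(G i *v u) \<bullet> (?V j *v (G i *v v))\<bar>))"
      unfolding inner_lyap sum_distrib_left[symmetric]
      by (rule order_trans[OF mult_left_mono[OF sum_abs]]) (simp_all add: abs_mult p_nonneg mult_ac sum_distrib_left)
    also have "\<dots> \<le> (\<Sum>j\<in>UNIV. p i j * ((G i *v u) \<bullet> (?W j *v (G i *v u)) + (G i *v v) \<bullet> (?W j *v (G i *v v))))"
      using Suc p_nonneg unfolding bilin_dominated_def by (intro sum_mono mult_left_mono) auto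
    also have "\<dots> = u \<bullet> (lyap p G ?W i *v u) + v \<bullet> (lyap p G ?W i *v v)"
      unfolding inner_lyap by (simp add: sum.distrib[symmetric] algebra_simps)
    finally show ?thesis .
  qed
  thus ?case unfolding bilin_dominated_def by simp
qed (simp add: assms)

end

lemma bilin_dominated_mat_1: "bilin_dominated (\<lambda>j. mat 1) (\<lambda>j. mat 1)"
  unfolding bilin_dominated_def by (simp add: two_abs_inner_le)

lemma sum_onorm_nonneg: "0 \<le> sum_onorm V"
  unfolding sum_onorm_def by (intro sum_nonneg onorm_pos_le) simp

lemma bilin_dominated_sum_onorm: "bilin_dominated V (\<lambda>j. sum_onorm V *\<^sub>R mat 1)"
  unfolding bilin_dominated_def
proof (intro allI)
  fix j u v
  have "onorm (\<lambda>x. V j *v x) \<le> sum_onorm V"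
    unfolding sum_onorm_def by (rule member_le_sum) (auto intro: onorm_pos_le)
  hence "norm (V j *v v) \<le> sum_onorm V * norm v"
    by (rule order_trans[OF onorm[OF matrix_vector_mul_bounded_linear] mult_right_mono]) simp
  hence "\<bar>u \<bullet> (V j *v v)\<bar> \<le> norm u * (sum_onorm V * norm v)"
    by (rule order_trans[OF Cauchy_Schwarz_ineq2 mult_left_mono]) simp
  hence "2 * \<bar>u \<bullet> (V j *v v)\<bar> \<le> sum_onorm V * (2 * norm u * norm v)" by (simp add: mult_ac)
  also have "\<dots> \<le> sum_onorm V * (norm u ^ 2 + norm v ^ 2)"
    by (intro mult_left_mono sum_onorm_nonneg) (simp add: sum_squares_bound)
  finally show "2 * \<bar>u \<bullet> (V j *v v)\<bar> \<le> u \<bullet> ((sum_onorm V *\<^sub>R mat 1) *v u) + v \<bullet> ((sum_onorm V *\<^sub>R mat 1) *v v)"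
    by (simp add: inner_scaleR_mv power2_norm_eq_inner algebra_simps)
qed

context
  fixes p :: "'s::finite \<Rightarrow> 's \<Rightarrow> real"
  assumes p_nonneg: "\<And>i j. 0 \<le> p i j"
begin

lemma lyap_pow_contraction_iterate:
  assumes half: "\<And>j x. x \<bullet> ((lyap p G ^^ N) (\<lambda>j. mat 1) j *v x) \<le> (1/2) * (x \<bullet> x)"
  shows "x \<bullet> ((lyap p G ^^ (k * N + s)) (\<lambda>j. mat 1) i *v x)
    \<le> (1/2)^k * (x \<bullet> ((lyap p G ^^ s) (\<lambda>j. mat 1) i *v x))"
proof (induction k arbitrary: i x)
  case (Suc k)
  let ?W = "\<lambda>t. (lyap p G ^^ t) (\<lambda>j. mat 1)"
  have "Suc k * N + s = (k * N + s) + N" by simp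
  hence "?W (Suc k * N + s) = (lyap p G ^^ (k * N + s)) (?W N)" by (simp only: funpow_add o_apply)
  hence "x \<bullet> (?W (Suc k * N + s) i *v x) \<le> x \<bullet> ((lyap p G ^^ (k * N + s)) (\<lambda>j. (1/2) *\<^sub>R mat 1) i *v x)"
    using lyap_pow_qf_mono[OF p_nonneg, of "?W N" "\<lambda>j. (1/2) *\<^sub>R mat 1"] half by (simp add: inner_scaleR_mv)
  also have "\<dots> = (1/2) * (x \<bullet> (?W (k * N + s) i *v x))"
    unfolding lyap_pow_scaleR by (rule inner_scaleR_mv)
  also have "\<dots> \<le> (1/2) * ((1/2)^k * (x \<bullet> (?W s i *v x)))"
    using Suc by simp
  finally show ?case by simp
qed simp

lemma geo_stable_if_contraction:
  fixes G :: "'s \<Rightarrow> real^'d^'d"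
  assumes N: "0 < N" and half: "\<And>j x. x \<bullet> ((lyap p G ^^ N) (\<lambda>j. mat 1) j *v x) \<le> (1/2) * (x \<bullet> x)"
  shows "\<exists>C r. geo_stable p G C r"
proof -
  define W where "W t = (lyap p G ^^ t) (\<lambda>j. mat 1)" for t
  define c where "c = (\<Sum>s<N. \<Sum>i\<in>UNIV. \<Sum>a\<in>UNIV. \<Sum>b\<in>UNIV. \<bar>W s i $ a $ b\<bar>)"
  have c: "x \<bullet> (W s i *v x) \<le> c * (x \<bullet> x)" if "s < N" for s i x
  proof -
    have "(\<Sum>a\<in>UNIV. \<Sum>b\<in>UNIV. \<bar>W s i $ a $ b\<bar>) \<le> c"
      unfolding c_def using that
      by (intro order_trans[OF member_le_sum[of i] member_le_sum[of s]]) (auto intro: sum_nonneg)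
    thus ?thesis by (rule order_trans[OF qf_le_entries mult_right_mono]) simp
  qed
  have c0: "0 \<le> c" unfolding c_def by (intro sum_nonneg) auto
  define r where "r = root N (1/2)"
  have r: "0 \<le> r" "r < 1" "r ^ N = 1/2" using N unfolding r_def by auto
  have "x \<bullet> (W t i *v x) \<le> (2 * c) * r ^ t * (x \<bullet> x)" for t i x
  proof -
    define k where "k = t div N"
    define s where "s = t mod N"
    have t: "t = k * N + s" and sN: "s < N" unfolding k_def s_def using N by simp_all
    have "1/2 \<le> r ^ s" using power_decreasing[of s N r] sN r by simp
    hence "(1/2::real)^k \<le> 2 * r ^ t"
      unfolding t by (simp add: power_add power_mult mult.commute[of k] r(3))
    hence le: "(1/2)^k * (c * (x \<bullet> x)) \<le> 2 * r ^ t * (c * (x \<bullet> x))"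
      by (rule mult_right_mono) (simp add: c0)
    have "x \<bullet> (W t i *v x) \<le> (1/2)^k * (x \<bullet> (W s i *v x))"
      unfolding t W_def by (rule lyap_pow_contraction_iterate[OF half])
    also have "\<dots> \<le> (1/2)^k * (c * (x \<bullet> x))" by (rule mult_left_mono[OF c[OF sN]]) simp
    also note le
    finally show ?thesis by (simp add: mult_ac)
  qed
  hence "geo_stable p G (2 * c) r" unfolding geo_stable_def W_def using c0 r by auto
  thus ?thesis by blast
qed

lemma geo_stable_if_qf_tendsto_0:
  fixes G :: "'s \<Rightarrow> real^'d^'d"
  assumes conv: "\<And>i x. (\<lambda>t. x \<bullet> ((lyap p G ^^ t) (\<lambda>j. mat 1) i *v x)) \<longlonglongrightarrow> 0"
  shows "\<exists>C r. geo_stable p G C r"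
proof -
  define W where "W t = (lyap p G ^^ t) (\<lambda>j. mat 1)" for t
  have entry: "(\<lambda>t. \<bar>W t i $ a $ b\<bar>) \<longlonglongrightarrow> 0" for i a b
  proof (rule Lim_null_comparison)
    have "bilin_dominated (W t) (W t)" for t
      unfolding W_def by (rule bilin_dominated_lyap_pow[OF p_nonneg bilin_dominated_mat_1])
    hence "2 * \<bar>W t i $ a $ b\<bar> \<le> axis a 1 \<bullet> (W t i *v axis a 1) + axis b 1 \<bullet> (W t i *v axis b 1)" for t
      unfolding bilin_dominated_def by (metis inner_axis_mv_axis)
    hence "\<bar>W t i $ a $ b\<bar> \<le> axis a 1 \<bullet> (W t i *v axis a 1) + axis b 1 \<bullet> (W t i *v axis b 1)" for t
      by (smt (verit) abs_ge_zero)
    thus "\<forall>\<^sub>F t in sequentially. norm \<bar>W t i $ a $ b\<bar> \<le> axis a 1 \<bullet> (W t i *v axis a 1) + axis b 1 \<bullet> (W t i *v axis b 1)"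
      by simp
    show "(\<lambda>t. axis a 1 \<bullet> (W t i *v axis a 1) + axis b 1 \<bullet> (W t i *v axis b 1)) \<longlonglongrightarrow> 0"
      unfolding W_def using tendsto_add[OF conv conv] by simp
  qed
  define e where "e t = (\<Sum>i\<in>UNIV. \<Sum>a\<in>UNIV. \<Sum>b\<in>UNIV. \<bar>W t i $ a $ b\<bar>)" for t
  have "e \<longlonglongrightarrow> 0" unfolding e_def using tendsto_sum[OF tendsto_sum[OF tendsto_sum[OF entry]]] by simp
  then obtain N0 where N0: "\<And>t. t \<ge> N0 \<Longrightarrow> e t < 1/2"
    using order_tendstoD(2)[of e 0 sequentially "1/2"] by (auto simp: eventually_sequentially)
  have "x \<bullet> (W (Suc N0) j *v x) \<le> (1/2) * (x \<bullet> x)" for j x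
  proof -
    have "(\<Sum>a\<in>UNIV. \<Sum>b\<in>UNIV. \<bar>W (Suc N0) j $ a $ b\<bar>) \<le> 1/2"
      using N0[of "Suc N0"] member_le_sum[of j UNIV "\<lambda>i. \<Sum>a\<in>UNIV. \<Sum>b\<in>UNIV. \<bar>W (Suc N0) i $ a $ b\<bar>"]
      unfolding e_def by (force intro: sum_nonneg)
    thus ?thesis by (rule order_trans[OF qf_le_entries mult_right_mono]) simp
  qed
  thus ?thesis unfolding W_def by (intro geo_stable_if_contraction[of "Suc N0"]) auto
qed

lemma geo_stable_inner_le:
  assumes "geo_stable p G C r"
  shows "2 * \<bar>u \<bullet> ((lyap p G ^^ t) V i *v v)\<bar> \<le> sum_onorm V * C * r ^ t * (u \<bullet> u + v \<bullet> v)"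
proof -
  have "2 * \<bar>u \<bullet> ((lyap p G ^^ t) V i *v v)\<bar> \<le>
     sum_onorm V * (u \<bullet> ((lyap p G ^^ t) (\<lambda>j. mat 1) i *v u)) + sum_onorm V * (v \<bullet> ((lyap p G ^^ t) (\<lambda>j. mat 1) i *v v))"
    using bilin_dominated_lyap_pow[OF p_nonneg bilin_dominated_sum_onorm[of V], where G=G and t=t]
    unfolding bilin_dominated_def lyap_pow_scaleR by (simp flip: scaleR_matrix_vector_assoc)
  also have "\<dots> \<le> sum_onorm V * (C * r ^ t * (u \<bullet> u)) + sum_onorm V * (C * r ^ t * (v \<bullet> v))"
    using assms sum_onorm_nonneg[of V] unfolding geo_stable_def by (intro add_mono mult_left_mono) auto
  finally show ?thesis by (simp add: algebra_simps)
qed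

lemma geo_stable_entry_le:
  assumes "geo_stable p G C r"
  shows "\<bar>(lyap p G ^^ t) V i $ a $ b\<bar> \<le> sum_onorm V * C * r ^ t"
  using geo_stable_inner_le[OF assms, of "axis a 1" t V i "axis b 1"] by (simp add: inner_axis_mv_axis)

end

lemma summable_vec_componentwise:
  fixes f :: "nat \<Rightarrow> 'a::real_normed_vector^'n"
  assumes "\<And>a. summable (\<lambda>t. f t $ a)"
  shows "summable f"
proof -
  have "f sums (\<chi> a. suminf (\<lambda>t. f t $ a))"
    unfolding sums_def by (rule vec_tendstoI) (simp add: summable_LIMSEQ assms)
  thus ?thesis by (rule sums_summable)
qed

lemma summable_matrix_entrywise:
  fixes f :: "nat \<Rightarrow> real^'n^'m"
  assumes "\<And>a b. summable (\<lambda>t. f t $ a $ b)"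
  shows "summable f"
  by (intro summable_vec_componentwise assms)

lemma sums_inner_mv:
  fixes f :: "nat \<Rightarrow> real^'n^'m"
  assumes "f sums S"
  shows "(\<lambda>t. u \<bullet> (f t *v w)) sums (u \<bullet> (S *v w))"
proof -
  have "u \<bullet> (X *v w) = (\<Sum>a\<in>UNIV. \<Sum>b\<in>UNIV. X$a$b * (u$a * w$b))" for X :: "real^'n^'m"
    by (simp add: inner_vec_def matrix_vector_mult_def sum_distrib_left mult_ac)
  thus ?thesis by (simp only:) (intro sums_sum sums_mult2 sums_vec_nth assms)
qed

context
  fixes p :: "'s::finite \<Rightarrow> 's \<Rightarrow> real" and G :: "'s \<Rightarrow> real^'d^'d" and C r :: real
  assumes p_nonneg: "\<And>i j. 0 \<le> p i j" and geo: "geo_stable p G C r"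
begin

lemma lyap_sum_sums: "(\<lambda>t. (lyap p G ^^ t) V i) sums lyap_sum p G V i"
proof -
  have "summable (\<lambda>t. (lyap p G ^^ t) V i $ a $ b)" for a b
  proof (rule summable_comparison_test)
    show "\<exists>N. \<forall>t\<ge>N. norm ((lyap p G ^^ t) V i $ a $ b) \<le> sum_onorm V * C * r ^ t"
      using geo_stable_entry_le[OF p_nonneg geo] by auto
    show "summable (\<lambda>t. sum_onorm V * C * r ^ t)"
      using geo unfolding geo_stable_def by (intro summable_mult summable_geometric) auto
  qed
  thus ?thesis unfolding lyap_sum_def by (intro summable_sums summable_matrix_entrywise)
qed

lemma lyap_sum_eq: "lyap_sum p G V i = V i + lyap p G (lyap_sum p G V) i"
proof (rule matrix_eq_inner)
  fix u w
  have "(\<lambda>t. u \<bullet> ((lyap p G ^^ Suc t) V i *v w)) sums (u \<bullet> (lyap p G (lyap_sum p G V) i *v w))"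
    unfolding funpow.simps o_apply inner_lyap by (intro sums_sum sums_mult sums_inner_mv lyap_sum_sums)
  hence "(\<lambda>t. u \<bullet> ((lyap p G ^^ t) V i *v w)) sums (u \<bullet> (lyap p G (lyap_sum p G V) i *v w) + u \<bullet> (V i *v w))"
    using sums_Suc_iff[where f="\<lambda>t. u \<bullet> ((lyap p G ^^ t) V i *v w)"] by simp
  with sums_inner_mv[OF lyap_sum_sums] show "u \<bullet> (lyap_sum p G V i *v w) = u \<bullet> ((V i + lyap p G (lyap_sum p G V) i) *v w)"
    by (simp add: sums_iff matrix_vector_mult_add_rdistrib inner_add_right)
qed

lemma lyap_fixpoint_unique:
  assumes P1: "\<And>i. P1 i = V i + lyap p G P1 i" and P2: "\<And>i. P2 i = V i + lyap p G P2 i"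
  shows "P1 = P2"
proof -
  define Z where "Z j = P1 j - P2 j" for j
  have "P1 i - P2 i = lyap p G P1 i - lyap p G P2 i" for i by (subst P1, subst P2) simp
  hence "lyap p G Z = Z" unfolding Z_def lyap_diff by simp
  hence Zt: "(lyap p G ^^ t) Z = Z" for t by (induction t) simp_all
  have "Z i $ a $ b = 0" for i a b
  proof -
    have "(\<lambda>t. sum_onorm Z * C * r ^ t) \<longlonglongrightarrow> sum_onorm Z * C * 0"
      using geo unfolding geo_stable_def by (intro tendsto_intros LIMSEQ_power_zero) auto
    hence "\<bar>Z i $ a $ b\<bar> \<le> sum_onorm Z * C * 0"
      by (rule LIMSEQ_le_const) (use geo_stable_entry_le[OF p_nonneg geo, of _ Z i a b] in \<open>auto simp: Zt\<close>)
    thus ?thesis by simp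
  qed
  thus ?thesis unfolding Z_def by (simp add: fun_eq_iff vec_eq_iff)
qed

lemma lyap_sum_sym:
  assumes "\<And>i. sym_mat (V i)"
  shows "sym_mat (lyap_sum p G V i)"
proof -
  have "(\<lambda>j. transpose (lyap_sum p G V j)) = lyap_sum p G V"
  proof (rule lyap_fixpoint_unique)
    show "transpose (lyap_sum p G V i) = V i + lyap p G (\<lambda>j. transpose (lyap_sum p G V j)) i" for i
      using assms[of i] by (subst lyap_sum_eq) (simp add: transpose_add lyap_transpose sym_mat_def)
  qed (rule lyap_sum_eq)
  thus ?thesis unfolding sym_mat_def by metis
qed

lemma lyap_sum_psd:
  assumes "\<And>j x. 0 \<le> x \<bullet> (V j *v x)"
  shows "0 \<le> x \<bullet> (lyap_sum p G V i *v x)"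
  by (rule sums_le[OF _ sums_zero sums_inner_mv[OF lyap_sum_sums]])
     (rule lyap_pow_qf_nonneg[OF p_nonneg assms])

end

section \<open>Mean-square stability and path expectations\<close>

lemma paths_0: "paths 0 = (\<lambda>i. [i]) ` UNIV"
  unfolding paths_def by (auto simp: length_Suc_conv)

lemma paths_Suc: "paths (Suc t) = (\<lambda>(ws, j). ws @ [j]) ` (paths t \<times> (UNIV :: 's::finite set))"
proof
  show "paths (Suc t) \<subseteq> (\<lambda>(ws, j). ws @ [j]) ` (paths t \<times> (UNIV :: 's set))"
  proof
    fix ws :: "'s list" assume "ws \<in> paths (Suc t)"
    hence l: "length ws = Suc (Suc t)" unfolding paths_def by simp
    hence "ws = butlast ws @ [last ws]" by (metis append_butlast_last_id list.size(3) nat.simps(3))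
    moreover have "butlast ws \<in> paths t" using l unfolding paths_def by simp
    ultimately show "ws \<in> (\<lambda>(ws, j). ws @ [j]) ` (paths t \<times> UNIV)" by force
  qed
qed (auto simp: paths_def)

lemma sum_paths_Suc: "(\<Sum>ws\<in>paths (Suc t). f ws) = (\<Sum>ws\<in>paths t. \<Sum>j\<in>UNIV. f (ws @ [j]))"
proof -
  have "inj_on (\<lambda>(ws, j). ws @ [j]) (paths t \<times> UNIV)" by (auto simp: inj_on_def)
  hence "(\<Sum>ws\<in>paths (Suc t). f ws) = (\<Sum>(ws, j)\<in>paths t \<times> UNIV. f (ws @ [j]))"
    unfolding paths_Suc by (subst sum.reindex) (simp_all add: case_prod_beta)
  thus ?thesis by (simp add: sum.cartesian_product)
qed

lemma path_weight_snoc: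
  assumes "length ws = Suc t"
  shows "path_weight p d (ws @ [j]) = path_weight p d ws * p (ws ! t) j"
proof -
  have a: "(ws @ [j]) ! s = ws ! s" if "s < Suc t" for s using that assms by (simp add: nth_append)
  have "(\<Prod>s<Suc t. p ((ws @ [j]) ! s) ((ws @ [j]) ! Suc s)) = (\<Prod>s<t. p (ws ! s) (ws ! Suc s)) * p (ws ! t) j"
    using assms by (simp add: a nth_append)
  thus ?thesis unfolding path_weight_def using assms by (simp add: a nth_append mult_ac)
qed

lemma traj_snoc: "n \<le> length ws \<Longrightarrow> traj G (ws @ [j]) x n = traj G ws x n"
  by (induction n) (auto simp: nth_append)

lemma path_expectation_qf_eq_lyap:
  fixes G :: "'s::finite \<Rightarrow> real^'d^'d"
  shows "(\<Sum>ws\<in>paths t. path_weight p d ws * (traj G ws x t \<bullet> (V (ws ! t) *v traj G ws x t)))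
         = (\<Sum>i\<in>UNIV. d i * (x \<bullet> ((lyap p G ^^ t) V i *v x)))"
proof (induction t arbitrary: V)
  case 0
  have "inj (\<lambda>i::'s. [i])" by (auto simp: inj_def)
  thus ?case unfolding paths_0 by (simp add: sum.reindex path_weight_def)
next
  case (Suc t)
  have "(\<Sum>j\<in>UNIV. path_weight p d (ws @ [j]) * (traj G (ws @ [j]) x (Suc t) \<bullet> (V ((ws @ [j]) ! Suc t) *v traj G (ws @ [j]) x (Suc t))))
      = path_weight p d ws * (traj G ws x t \<bullet> (lyap p G V (ws ! t) *v traj G ws x t))" if "ws \<in> paths t" for ws
  proof -
    have l: "length ws = Suc t" using that unfolding paths_def by simp
    hence "traj G (ws @ [j]) x (Suc t) = G (ws ! t) *v traj G ws x t" "(ws @ [j]) ! Suc t = j" for j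
      using traj_snoc[of t ws G j x] by (simp_all add: nth_append)
    thus ?thesis unfolding path_weight_snoc[OF l] inner_lyap by (simp add: sum_distrib_left mult_ac)
  qed
  hence "(\<Sum>ws\<in>paths (Suc t). path_weight p d ws * (traj G ws x (Suc t) \<bullet> (V (ws ! Suc t) *v traj G ws x (Suc t))))
      = (\<Sum>ws\<in>paths t. path_weight p d ws * (traj G ws x t \<bullet> (lyap p G V (ws ! t) *v traj G ws x t)))"
    unfolding sum_paths_Suc by (rule sum.cong[OF refl])
  also have "\<dots> = (\<Sum>i\<in>UNIV. d i * (x \<bullet> ((lyap p G ^^ Suc t) V i *v x)))"
    unfolding Suc.IH by (simp only: funpow_Suc_right o_apply)
  finally show ?case .
qed

lemma ms_stable_qf_tendsto_0:
  fixes G :: "'s::finite \<Rightarrow> real^'d^'d"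
  assumes "ms_stable p G"
  shows "(\<lambda>t. x \<bullet> ((lyap p G ^^ t) (\<lambda>j. mat 1) i *v x)) \<longlonglongrightarrow> 0"
proof -
  define d where "d j = (if j = i then 1 else (0::real))" for j
  have "(\<lambda>t. \<Sum>ws\<in>paths t. path_weight p d ws * (norm (traj G ws x t))\<^sup>2) \<longlonglongrightarrow> 0"
    using assms unfolding ms_stable_def d_def by (auto simp: if_distrib cong: if_cong)
  moreover have "(\<Sum>ws\<in>paths t. path_weight p d ws * (norm (traj G ws x t))\<^sup>2) = x \<bullet> ((lyap p G ^^ t) (\<lambda>j. mat 1) i *v x)" for t
  proof -
    have "(\<Sum>j\<in>UNIV. d j * f j) = f i" for f :: "'s \<Rightarrow> real"
      by (simp add: d_def if_distrib[of "\<lambda>c. c * _"] cong: if_cong)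
    thus ?thesis using path_expectation_qf_eq_lyap[where t=t and p=p and d=d and G=G and x=x and V="\<lambda>j. mat 1"]
      by (simp add: power2_norm_eq_inner)
  qed
  ultimately show ?thesis by simp
qed

lemma ms_stable_imp_geo_stable:
  fixes G :: "'s::finite \<Rightarrow> real^'d^'d"
  assumes "\<And>i j. 0 \<le> p i j" "ms_stable p G"
  obtains C r where "geo_stable p G C r"
  using geo_stable_if_qf_tendsto_0[OF assms(1) ms_stable_qf_tendsto_0[OF assms(2)]] by blast

lemma traj_linear: "\<exists>Phi. \<forall>x. traj G ws x t = Phi *v x"
proof (induction t)
  case 0 show ?case by (rule exI[of _ "mat 1"]) simp
next
  case (Suc t)
  then obtain Phi where "\<forall>x. traj G ws x t = Phi *v x" by blast
  thus ?case by (intro exI[of _ "G (ws ! t) ** Phi"]) (simp add: matrix_vector_mul_assoc)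
qed

section \<open>Expected quadratic forms along the closed loop\<close>

definition stage_cost :: "('s \<Rightarrow> real^'d^'d) \<Rightarrow> ('s \<Rightarrow> real^'k^'k) \<Rightarrow> ('s \<Rightarrow> real^'d^'k) \<Rightarrow> 's \<Rightarrow> real^'d^'d" where
  "stage_cost Q R K i = Q i + transpose (K i) ** R i ** K i"

lemma matrix_vector_mult_uminus_right: "(X::real^'n^'m) *v (- x) = - (X *v x)"
  by (simp add: matrix_vector_mult_def vec_eq_iff sum_negf)

lemma frob_conj: "frob (transpose G ** E ** G) Y = frob E (G ** Y ** transpose (G::real^'n^'n))"
proof -
  have trace: "frob X Z = trace (transpose X ** Z)" for X Z :: "real^'n^'n"
    by (simp add: frob_def trace_def matrix_matrix_mult_def transpose_def) (rule sum.swap)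
  have "trace (transpose G ** (transpose E ** G ** Y)) = trace ((transpose E ** G ** Y) ** transpose G)"
    by (rule trace_mul_sym)
  thus ?thesis unfolding trace by (simp add: matrix_transpose_mul matrix_mul_assoc)
qed

lemma sum_frob_lyap_eq_Top:
  "(\<Sum>i\<in>UNIV. frob (lyap p G V i) (Y i)) = (\<Sum>j\<in>UNIV. frob (V j) (Top p G Y j))"
proof -
  have "(\<Sum>i\<in>UNIV. frob (lyap p G V i) (Y i)) = (\<Sum>i\<in>UNIV. \<Sum>j\<in>UNIV. p i j * frob (V j) (G i ** Y i ** transpose (G i)))"
    unfolding lyap_def frob_conj Eop_def frob_sum_left frob_scaleR_left ..
  also have "\<dots> = (\<Sum>j\<in>UNIV. frob (V j) (Top p G Y j))"
    unfolding Top_def frob_sum_right frob_scaleR_right by (rule sum.swap)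
  finally show ?thesis .
qed

lemma sums_frob_left:
  fixes f :: "nat \<Rightarrow> real^'n^'m"
  assumes "f sums S"
  shows "(\<lambda>t. frob (f t) Y) sums frob S Y"
  unfolding frob_def by (intro sums_sum sums_mult2 sums_vec_nth assms)

lemma sums_frob_right:
  fixes f :: "nat \<Rightarrow> real^'n^'m"
  assumes "f sums S"
  shows "(\<lambda>t. frob Y (f t)) sums frob Y S"
  unfolding frob_def by (intro sums_sum sums_mult sums_vec_nth assms)

locale mjls =
  fixes M :: "'a measure" and x0 :: "'a \<Rightarrow> real^'d"
    and pini :: "'s::finite \<Rightarrow> real" and p :: "'s \<Rightarrow> 's \<Rightarrow> real"
  assumes x0_meas: "x0 \<in> borel_measurable M"
    and x0_sq: "\<And>j. integrable M (\<lambda>w. (x0 w $ j)\<^sup>2)"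
    and p_nonneg: "\<And>i j. 0 \<le> p i j" and pini_nonneg: "\<And>i. 0 \<le> pini i"
begin

definition init_qf :: "('s \<Rightarrow> real^'d^'d) \<Rightarrow> real" where
  "init_qf V = (\<Sum>i\<in>UNIV. pini i * frob (V i) (second_moment M x0))"

(* mean_qf G V t = E[x_t^T V_{omega(t)} x_t] along x_{t+1} = G_{omega(t)} x_t. *)
definition mean_qf :: "('s \<Rightarrow> real^'d^'d) \<Rightarrow> ('s \<Rightarrow> real^'d^'d) \<Rightarrow> nat \<Rightarrow> real" where
  "mean_qf G V t = init_qf ((lyap p G ^^ t) V)"

lemma integrable_x0_product: "integrable M (\<lambda>w. x0 w $ a * x0 w $ b)"
proof (rule Bochner_Integration.integrable_bound)
  show "integrable M (\<lambda>w. (x0 w $ a)\<^sup>2 + (x0 w $ b)\<^sup>2)" by (intro Bochner_Integration.integrable_add x0_sq)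
  have "(\<lambda>w. x0 w $ c) \<in> borel_measurable M" for c
    using borel_measurable_inner[OF x0_meas borel_measurable_const[of "axis c 1"]]
    by (simp add: cart_eq_inner_axis[symmetric])
  thus "(\<lambda>w. x0 w $ a * x0 w $ b) \<in> borel_measurable M" by (intro borel_measurable_times)
  show "AE w in M. norm (x0 w $ a * x0 w $ b) \<le> norm ((x0 w $ a)\<^sup>2 + (x0 w $ b)\<^sup>2)"
  proof (rule AE_I2)
    fix w
    have "2 * \<bar>x0 w $ a * x0 w $ b\<bar> \<le> (x0 w $ a)\<^sup>2 + (x0 w $ b)\<^sup>2"
      using two_abs_inner_le[of "x0 w $ a" "x0 w $ b"] by (simp add: power2_eq_square)
    thus "norm (x0 w $ a * x0 w $ b) \<le> norm ((x0 w $ a)\<^sup>2 + (x0 w $ b)\<^sup>2)" by simp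
  qed
qed

lemma integrable_x0_qf: "integrable M (\<lambda>w. x0 w \<bullet> (W *v x0 w))"
  unfolding qf_expand by (simp add: integrable_x0_product)

lemma integral_x0_qf: "(\<integral>w. x0 w \<bullet> (W *v x0 w) \<partial>M) = frob W (second_moment M x0)"
  unfolding qf_expand frob_def second_moment_def
  by (simp add: Bochner_Integration.integral_sum integrable_x0_product)

lemma frob_second_moment_mono:
  "(\<And>x. x \<bullet> (W *v x) \<le> x \<bullet> (W' *v x)) \<Longrightarrow> frob W (second_moment M x0) \<le> frob W' (second_moment M x0)"
  unfolding integral_x0_qf[symmetric] by (rule integral_mono[OF integrable_x0_qf integrable_x0_qf])

lemma frob_second_moment_nonneg: "(\<And>x. 0 \<le> x \<bullet> (W *v x)) \<Longrightarrow> 0 \<le> frob W (second_moment M x0)"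
  unfolding integral_x0_qf[symmetric] by (rule integral_nonneg_AE) auto

lemma path_expectation_integral:
  fixes G :: "'s \<Rightarrow> real^'d^'d"
  shows "(\<Sum>ws\<in>paths t. path_weight p pini ws * (\<integral>w. traj G ws (x0 w) t \<bullet> (V (ws ! t) *v traj G ws (x0 w) t) \<partial>M))
    = mean_qf G V t"
proof -
  have int: "integrable M (\<lambda>w. traj G ws (x0 w) t \<bullet> (V (ws ! t) *v traj G ws (x0 w) t))" for ws
  proof -
    obtain Phi where "\<forall>x. traj G ws x t = Phi *v x" using traj_linear by blast
    thus ?thesis by (simp add: inner_conj_mv[symmetric] integrable_x0_qf)
  qed
  have "(\<Sum>ws\<in>paths t. path_weight p pini ws * (\<integral>w. traj G ws (x0 w) t \<bullet> (V (ws ! t) *v traj G ws (x0 w) t) \<partial>M))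
      = (\<integral>w. (\<Sum>i\<in>UNIV. pini i * (x0 w \<bullet> ((lyap p G ^^ t) V i *v x0 w))) \<partial>M)"
    by (simp add: int path_expectation_qf_eq_lyap[symmetric])
  also have "\<dots> = mean_qf G V t"
    by (simp add: mean_qf_def init_qf_def integrable_x0_qf integral_x0_qf)
  finally show ?thesis .
qed

lemma mjls_cost_eq_mean_qf:
  "mjls_cost M x0 pini p A B Q R K = (\<Sum>t. ereal (mean_qf (Gam A B K) (stage_cost Q R K) t))"
proof -
  have "(let x = traj (Gam A B K) ws (x0 w) t; u = - (K (ws ! t) *v x) in x \<bullet> (Q (ws ! t) *v x) + u \<bullet> (R (ws ! t) *v u))
     = traj (Gam A B K) ws (x0 w) t \<bullet> (stage_cost Q R K (ws ! t) *v traj (Gam A B K) ws (x0 w) t)" for ws t w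
    by (simp add: Let_def stage_cost_def matrix_vector_mult_add_rdistrib inner_add_right inner_conj_mv
        matrix_vector_mult_uminus_right)
  thus ?thesis unfolding mjls_cost_def by (simp only: path_expectation_integral)
qed

lemma mean_qf_0: "mean_qf G V 0 = init_qf V"
  by (simp add: mean_qf_def)

lemma mean_qf_Suc: "mean_qf G V (Suc t) = mean_qf G (lyap p G V) t"
  unfolding mean_qf_def init_qf_def by (simp only: funpow_Suc_right o_apply)

lemma mean_qf_add: "mean_qf G (\<lambda>j. V j + W j) t = mean_qf G V t + mean_qf G W t"
  by (simp add: mean_qf_def init_qf_def lyap_pow_add frob_add_left sum.distrib algebra_simps)

lemma mean_qf_scaleR: "mean_qf G (\<lambda>j. c *\<^sub>R V j) t = c * mean_qf G V t"
  by (simp add: mean_qf_def init_qf_def lyap_pow_scaleR frob_scaleR_left sum_distrib_left mult_ac)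

lemma mean_qf_mono: "(\<And>j x. x \<bullet> (V j *v x) \<le> x \<bullet> (W j *v x)) \<Longrightarrow> mean_qf G V t \<le> mean_qf G W t"
  unfolding mean_qf_def init_qf_def
  by (intro sum_mono mult_left_mono pini_nonneg frob_second_moment_mono lyap_pow_qf_mono[OF p_nonneg])

lemma mean_qf_nonneg: "(\<And>j x. 0 \<le> x \<bullet> (V j *v x)) \<Longrightarrow> 0 \<le> mean_qf G V t"
  unfolding mean_qf_def init_qf_def
  by (intro sum_nonneg mult_nonneg_nonneg pini_nonneg frob_second_moment_nonneg lyap_pow_qf_nonneg[OF p_nonneg])

lemma mean_qf_qf_cong: "(\<And>j x. x \<bullet> (V j *v x) = x \<bullet> (W j *v x)) \<Longrightarrow> mean_qf G V t = mean_qf G W t"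
  by (simp add: mean_qf_mono order_antisym)

lemma mean_qf_zero: "mean_qf G (\<lambda>j. 0) t = 0"
  using mean_qf_scaleR[of G 0 "\<lambda>j. 0" t] by simp

lemma mean_qf_telescope:
  "(\<Sum>t<N. mean_qf G V t) = mean_qf G P 0 - mean_qf G P N + (\<Sum>t<N. mean_qf G (\<lambda>j. V j + lyap p G P j - P j) t)"
proof (induction N)
  case (Suc N)
  have "mean_qf G V N + mean_qf G P (Suc N) = mean_qf G (\<lambda>j. V j + lyap p G P j - P j) N + mean_qf G P N"
    using mean_qf_add[of G "\<lambda>j. V j + lyap p G P j - P j" P N] mean_qf_add[of G V "lyap p G P" N]
    by (simp add: mean_qf_Suc)
  with Suc show ?case by simp
qed simp

lemma mean_qf_sums:
  assumes "geo_stable p G C r"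
  shows "mean_qf G V sums init_qf (lyap_sum p G V)"
  unfolding mean_qf_def[abs_def] init_qf_def by (intro sums_sum sums_mult sums_frob_left lyap_sum_sums[OF p_nonneg assms])

lemma mean_qf_eq_Top: "mean_qf G V t = (\<Sum>i\<in>UNIV. frob (V i) ((Top p G ^^ t) (X0 M x0 pini) i))"
proof (induction t arbitrary: V)
  case 0 show ?case by (simp add: mean_qf_def init_qf_def X0_def frob_scaleR_right mult_ac)
next
  case (Suc t) show ?case by (simp only: mean_qf_Suc Suc.IH sum_frob_lyap_eq_Top funpow.simps o_apply)
qed

lemma summable_Top_pow:
  assumes "geo_stable p G C r"
  shows "summable (\<lambda>t. (Top p G ^^ t) (X0 M x0 pini) i)"
proof (rule summable_matrix_entrywise)
  fix a b
  define E :: "'s \<Rightarrow> real^'d^'d" where "E j = (if j = i then outer (axis a 1) (axis b 1) else 0)" for j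
  have "(Top p G ^^ t) (X0 M x0 pini) i $ a $ b = mean_qf G E t" for t
    unfolding mean_qf_eq_Top
    by (simp add: E_def if_distrib[of "\<lambda>X. frob X _"] frob_outer inner_axis_mv_axis cong: if_cong)
  thus "summable (\<lambda>t. (Top p G ^^ t) (X0 M x0 pini) i $ a $ b)"
    using sums_summable[OF mean_qf_sums[OF assms]] by simp
qed

lemma mean_qf_sums_XK:
  assumes "geo_stable p (Gam A B K) C r"
  shows "mean_qf (Gam A B K) V sums (\<Sum>i\<in>UNIV. frob (V i) (XK M x0 pini p A B K i))"
  unfolding mean_qf_eq_Top[abs_def] XK_def
  by (intro sums_sum sums_frob_right summable_sums summable_Top_pow[OF assms])

end

section \<open>The natural policy gradient step\<close>

lemma lq_cost_shift:
  fixes R :: "real^'k^'k" and E :: "real^'d^'d" and B :: "real^'k^'d"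
  assumes "sym_mat R" "sym_mat E"
  shows "(k + d) \<bullet> (R *v (k + d)) - k \<bullet> (R *v k) + (a - B *v (k + d)) \<bullet> (E *v (a - B *v (k + d)))
      - (a - B *v k) \<bullet> (E *v (a - B *v k))
   = d \<bullet> (R *v d) + (B *v d) \<bullet> (E *v (B *v d)) + 2 * (d \<bullet> (R *v k) + (B *v d) \<bullet> (E *v (B *v k)) - (B *v d) \<bullet> (E *v a))"
  using sym_mat_swap[OF assms(1), of k d] sym_mat_swap[OF assms(2), of a "B *v d"]
    sym_mat_swap[OF assms(2), of "B *v k" "B *v d"]
  by (simp add: algebra_simps)

lemma lq_gain_change:
  fixes A :: "real^'d^'d" and B :: "real^'k^'d" and Q :: "real^'d^'d" and R :: "real^'k^'k"
    and K K' :: "real^'d^'k" and E :: "real^'d^'d" and x :: "real^'d"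
  assumes "sym_mat R" "sym_mat E"
  defines "d \<equiv> K' *v x - K *v x"
  shows "x \<bullet> ((Q + transpose K' ** R ** K') *v x) + ((A - B ** K') *v x) \<bullet> (E *v ((A - B ** K') *v x))
    - (x \<bullet> ((Q + transpose K ** R ** K) *v x) + ((A - B ** K) *v x) \<bullet> (E *v ((A - B ** K) *v x)))
    = d \<bullet> ((R + transpose B ** E ** B) *v d) + 2 * (d \<bullet> (((R + transpose B ** E ** B) ** K - transpose B ** E ** A) *v x))"
proof -
  define k where "k = K *v x"
  define a where "a = A *v x"
  have K': "K' *v x = k + d" unfolding k_def d_def by simp
  have "(A - B ** K') *v x = a - B *v (k + d)" "(A - B ** K) *v x = a - B *v k"
    by (simp_all add: matrix_vector_mult_diff_rdistrib K' a_def[symmetric] k_def[symmetric]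
        flip: matrix_vector_mul_assoc)
  moreover have "x \<bullet> ((Q + transpose K' ** R ** K') *v x) = x \<bullet> (Q *v x) + (k + d) \<bullet> (R *v (k + d))"
    "x \<bullet> ((Q + transpose K ** R ** K) *v x) = x \<bullet> (Q *v x) + k \<bullet> (R *v k)"
    by (simp_all add: matrix_vector_mult_add_rdistrib inner_add_right inner_conj_mv K' k_def)
  moreover have "d \<bullet> ((R + transpose B ** E ** B) *v d) = d \<bullet> (R *v d) + (B *v d) \<bullet> (E *v (B *v d))"
    by (simp add: matrix_vector_mult_add_rdistrib inner_add_right inner_conj_mv)
  moreover have "d \<bullet> (((R + transpose B ** E ** B) ** K - transpose B ** E ** A) *v x)
      = d \<bullet> (R *v k) + (B *v d) \<bullet> (E *v (B *v k)) - (B *v d) \<bullet> (E *v a)"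
  proof -
    have "((R + transpose B ** E ** B) ** K - transpose B ** E ** A) *v x
        = (R + transpose B ** E ** B) *v k - (transpose B ** E ** A) *v x"
      unfolding k_def by (simp add: matrix_vector_mult_diff_rdistrib matrix_vector_mul_assoc)
    thus ?thesis unfolding a_def
      by (simp add: inner_diff_right matrix_vector_mult_add_rdistrib inner_add_right inner_conj_mv)
  qed
  ultimately show ?thesis using lq_cost_shift[OF assms(1,2), of k d a B] by simp
qed

lemma stage_cost_qf: "x \<bullet> (stage_cost Q R K i *v x) = x \<bullet> (Q i *v x) + (K i *v x) \<bullet> (R i *v (K i *v x))"
  by (simp add: stage_cost_def matrix_vector_mult_add_rdistrib inner_add_right inner_conj_mv)

lemma sym_mat_stage_cost: "sym_mat (Q i) \<Longrightarrow> sym_mat (R i) \<Longrightarrow> sym_mat (stage_cost Q R K i)"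
  by (simp add: sym_mat_def stage_cost_def transpose_add matrix_transpose_mul matrix_mul_assoc)

lemma sym_mat_Eop:
  assumes "\<And>j. sym_mat (V j)"
  shows "sym_mat (Eop p V i)"
  unfolding sym_mat_def
  by (intro matrix_eq_inner) (simp only: inner_mv_transpose Eop_mv inner_sum_right inner_scaleR_right sym_mat_swap[OF assms])

lemma Eop_qf_nonneg: "(\<And>i j. 0 \<le> p i j) \<Longrightarrow> (\<And>j x. 0 \<le> x \<bullet> (V j *v x)) \<Longrightarrow> 0 \<le> x \<bullet> (Eop p V i *v x)"
  unfolding Eop_mv by (simp add: inner_sum_right sum_nonneg)

locale mjls_gain = mjls M x0 pini p
  for M :: "'a measure" and x0 :: "'a \<Rightarrow> real^'d" and pini :: "'s::finite \<Rightarrow> real" and p +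
  fixes A :: "'s \<Rightarrow> real^'d^'d" and B :: "'s \<Rightarrow> real^'k^'d"
    and Q :: "'s \<Rightarrow> real^'d^'d" and R :: "'s \<Rightarrow> real^'k^'k" and K :: "'s \<Rightarrow> real^'d^'k"
  assumes Q_pd: "\<And>i. posdef (Q i)" and R_pd: "\<And>i. posdef (R i)"
    and K_stable: "ms_stable p (Gam A B K)"
begin

definition Psi :: "'s \<Rightarrow> real^'k^'k" where
  "Psi i = R i + transpose (B i) ** Eop p (PK p A B Q R K) i ** B i"

(* D_i = L_i^T Psi_i^-1 L_i, the Psi-norm square of the natural gradient Psi^-1 L. *)
definition grad_gram :: "'s \<Rightarrow> real^'d^'d" where
  "grad_gram i = transpose (LK p A B Q R K i) ** matrix_inv (Psi i) ** LK p A B Q R K i"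

definition step_gain :: "real \<Rightarrow> 's \<Rightarrow> real^'d^'k" where
  "step_gain eta i = K i - (2 * eta) *\<^sub>R (matrix_inv (Psi i) ** LK p A B Q R K i)"

lemma geo_stable_K:
  obtains C r where "geo_stable p (Gam A B K) C r"
  using ms_stable_imp_geo_stable[OF p_nonneg K_stable] .

lemma stage_cost_qf_nonneg: "0 \<le> x \<bullet> (stage_cost Q R K' i *v x)"
  using posdef_psd_mat[OF Q_pd] posdef_psd_mat[OF R_pd] unfolding stage_cost_qf psd_mat_def
  by simp

lemma PK_eq_lyap_sum: "PK p A B Q R K = lyap_sum p (Gam A B K) (stage_cost Q R K)"
proof -
  obtain C r where geo: "geo_stable p (Gam A B K) C r" by (rule geo_stable_K)
  have "(\<forall>i. P i = Q i + transpose (K i) ** R i ** K i + transpose (Gam A B K i) ** Eop p P i ** Gam A B K i)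
    \<longleftrightarrow> (\<forall>i. P i = stage_cost Q R K i + lyap p (Gam A B K) P i)" for P
    by (simp add: stage_cost_def lyap_def)
  thus ?thesis unfolding PK_def
    by (intro the_equality) (auto intro: lyap_sum_eq[OF p_nonneg geo] lyap_fixpoint_unique[OF p_nonneg geo])
qed

lemma PK_fixpoint: "PK p A B Q R K i = stage_cost Q R K i + lyap p (Gam A B K) (PK p A B Q R K) i"
proof -
  obtain C r where geo: "geo_stable p (Gam A B K) C r" by (rule geo_stable_K)
  show ?thesis unfolding PK_eq_lyap_sum by (rule lyap_sum_eq[OF p_nonneg geo])
qed

lemma sym_mat_PK: "sym_mat (PK p A B Q R K i)"
proof -
  obtain C r where geo: "geo_stable p (Gam A B K) C r" by (rule geo_stable_K)
  show ?thesis unfolding PK_eq_lyap_sum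
    by (intro lyap_sum_sym[OF p_nonneg geo] sym_mat_stage_cost posdef_sym_mat Q_pd R_pd)
qed

lemma PK_qf_nonneg: "0 \<le> x \<bullet> (PK p A B Q R K i *v x)"
proof -
  obtain C r where geo: "geo_stable p (Gam A B K) C r" by (rule geo_stable_K)
  show ?thesis unfolding PK_eq_lyap_sum by (intro lyap_sum_psd[OF p_nonneg geo] stage_cost_qf_nonneg)
qed

lemma posdef_Psi: "posdef (Psi i)"
proof -
  let ?E = "Eop p (PK p A B Q R K) i"
  have E: "sym_mat ?E" "0 \<le> x \<bullet> (?E *v x)" for x
    by (intro sym_mat_Eop sym_mat_PK Eop_qf_nonneg p_nonneg PK_qf_nonneg)+
  have "z \<bullet> (Psi i *v z) = z \<bullet> (R i *v z) + (B i *v z) \<bullet> (?E *v (B i *v z))" for z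
    unfolding Psi_def by (simp add: matrix_vector_mult_add_rdistrib inner_add_right inner_conj_mv)
  moreover have "transpose (Psi i) = Psi i"
    using posdef_sym_mat[OF R_pd[of i]] E(1) unfolding Psi_def sym_mat_def
    by (simp add: transpose_add matrix_transpose_mul matrix_mul_assoc)
  ultimately show ?thesis using R_pd[of i] E(2) unfolding posdef_def by (simp add: add_pos_nonneg)
qed

(* Cost of using K' for one step and K thereafter, minus the cost of using K throughout. *)
definition advantage :: "('s \<Rightarrow> real^'d^'k) \<Rightarrow> 's \<Rightarrow> real^'d^'d" where
  "advantage K' i = stage_cost Q R K' i + lyap p (Gam A B K') (PK p A B Q R K) i - PK p A B Q R K i"

lemma Psi_mv_matrix_inv: "Psi i *v (matrix_inv (Psi i) *v y) = y"
  using posdef_matrix_inv(1)[OF posdef_Psi] by (simp add: matrix_vector_mul_assoc)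

lemma grad_gram_qf: "x \<bullet> (grad_gram i *v x) = (matrix_inv (Psi i) *v (LK p A B Q R K i *v x)) \<bullet> (LK p A B Q R K i *v x)"
  unfolding grad_gram_def inner_conj_mv by (rule inner_commute)

lemma sym_mat_grad_gram: "sym_mat (grad_gram i)"
  using sym_mat_matrix_inv[OF posdef_Psi] unfolding grad_gram_def sym_mat_def
  by (simp add: matrix_transpose_mul matrix_mul_assoc)

lemma psd_mat_grad_gram: "psd_mat (grad_gram i)"
  unfolding psd_mat_def grad_gram_qf
proof
  fix x
  define z where "z = matrix_inv (Psi i) *v (LK p A B Q R K i *v x)"
  have "z \<bullet> (LK p A B Q R K i *v x) = z \<bullet> (Psi i *v z)" unfolding z_def Psi_mv_matrix_inv ..
  thus "0 \<le> z \<bullet> (LK p A B Q R K i *v x)" using posdef_psd_mat[OF posdef_Psi] unfolding psd_mat_def by simp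
qed

lemma advantage_qf:
  fixes K' :: "'s \<Rightarrow> real^'d^'k" and i :: 's and x :: "real^'d"
  defines "d \<equiv> K' i *v x - K i *v x"
  shows "x \<bullet> (advantage K' i *v x) = d \<bullet> (Psi i *v d) + 2 * (d \<bullet> (LK p A B Q R K i *v x))"
proof -
  let ?P = "PK p A B Q R K" and ?E = "Eop p (PK p A B Q R K) i"
  have "sym_mat ?E" by (intro sym_mat_Eop sym_mat_PK)
  have lyap: "x \<bullet> (lyap p G ?P i *v x) = (G i *v x) \<bullet> (?E *v (G i *v x))" for G
    unfolding lyap_def inner_conj_mv ..
  have "x \<bullet> (advantage K' i *v x) = x \<bullet> (stage_cost Q R K' i *v x) + x \<bullet> (lyap p (Gam A B K') ?P i *v x)
      - (x \<bullet> (stage_cost Q R K i *v x) + x \<bullet> (lyap p (Gam A B K) ?P i *v x))"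
    unfolding advantage_def by (subst PK_fixpoint[of i])
      (simp only: matrix_vector_mult_add_rdistrib matrix_vector_mult_diff_rdistrib inner_add_right inner_diff_right)
  also have "\<dots> = d \<bullet> (Psi i *v d) + 2 * (d \<bullet> (LK p A B Q R K i *v x))"
    unfolding lyap stage_cost_def Gam_def Psi_def LK_def Let_def d_def
    by (rule lq_gain_change[OF posdef_sym_mat[OF R_pd[of i]] \<open>sym_mat ?E\<close>])
  finally show ?thesis .
qed

lemma advantage_step_gain_qf:
  "x \<bullet> (advantage (step_gain eta) i *v x) = - (4 * eta * (1 - eta)) * (x \<bullet> (grad_gram i *v x))"
proof -
  define y where "y = LK p A B Q R K i *v x"
  define z where "z = matrix_inv (Psi i) *v y"
  have d: "step_gain eta i *v x - K i *v x = (- (2 * eta)) *\<^sub>R z"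
    unfolding step_gain_def z_def y_def
    by (simp add: matrix_vector_mult_diff_rdistrib scaleR_matrix_vector_assoc[symmetric] matrix_vector_mul_assoc)
  have "Psi i *v ((- (2 * eta)) *\<^sub>R z) = (- (2 * eta)) *\<^sub>R y"
    unfolding matrix_vector_mult_scaleR z_def Psi_mv_matrix_inv ..
  thus ?thesis
    unfolding advantage_qf d grad_gram_qf y_def[symmetric] z_def[symmetric]
    by (simp add: algebra_simps)
qed

lemma advantage_qf_ge: "- (x \<bullet> (grad_gram i *v x)) \<le> x \<bullet> (advantage K' i *v x)"
proof -
  define y where "y = LK p A B Q R K i *v x"
  define z where "z = matrix_inv (Psi i) *v y"
  define d where "d = K' i *v x - K i *v x"
  have Psi_z: "Psi i *v z = y" unfolding z_def by (rule Psi_mv_matrix_inv)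
  have "z \<bullet> (Psi i *v d) = d \<bullet> y"
    using sym_mat_swap[OF posdef_sym_mat[OF posdef_Psi[of i]], of z d] Psi_z by simp
  hence "(d + z) \<bullet> (Psi i *v (d + z)) = d \<bullet> (Psi i *v d) + 2 * (d \<bullet> y) + z \<bullet> y"
    by (simp add: Psi_z algebra_simps inner_commute[of z y])
  moreover have "0 \<le> (d + z) \<bullet> (Psi i *v (d + z))"
    using posdef_psd_mat[OF posdef_Psi] unfolding psd_mat_def by blast
  ultimately show ?thesis
    unfolding advantage_qf grad_gram_qf d_def[symmetric] y_def[symmetric] z_def[symmetric] by simp
qed

lemma partial_cost_telescope:
  "(\<Sum>t<N. mean_qf (Gam A B K') (stage_cost Q R K') t) = init_qf (PK p A B Q R K)
    - mean_qf (Gam A B K') (PK p A B Q R K) N + (\<Sum>t<N. mean_qf (Gam A B K') (advantage K') t)"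
  using mean_qf_telescope[of "Gam A B K'" "stage_cost Q R K'" N "PK p A B Q R K"]
  unfolding mean_qf_0 advantage_def .

lemma mjls_cost_K: "mjls_cost M x0 pini p A B Q R K = ereal (init_qf (PK p A B Q R K))"
proof -
  obtain C r where geo: "geo_stable p (Gam A B K) C r" by (rule geo_stable_K)
  have "advantage K = (\<lambda>j. 0)" unfolding advantage_def using PK_fixpoint by (simp add: fun_eq_iff)
  hence "(\<Sum>t<N. mean_qf (Gam A B K) (stage_cost Q R K) t) = init_qf (PK p A B Q R K) - mean_qf (Gam A B K) (PK p A B Q R K) N"
    for N unfolding partial_cost_telescope by (simp add: mean_qf_zero)
  moreover have "mean_qf (Gam A B K) (PK p A B Q R K) \<longlonglongrightarrow> 0"
    by (rule summable_LIMSEQ_zero[OF sums_summable[OF mean_qf_sums[OF geo]]])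
  ultimately have "mean_qf (Gam A B K) (stage_cost Q R K) sums init_qf (PK p A B Q R K)"
    unfolding sums_def using tendsto_diff[OF tendsto_const] by fastforce
  thus ?thesis unfolding mjls_cost_eq_mean_qf by (simp add: sums_ereal sums_unique[symmetric])
qed

lemma mjls_cost_ge:
  assumes "ms_stable p (Gam A B K')"
  obtains s where "mjls_cost M x0 pini p A B Q R K' = ereal s"
    "init_qf (PK p A B Q R K) - (\<Sum>i\<in>UNIV. frob (grad_gram i) (XK M x0 pini p A B K' i)) \<le> s"
proof -
  obtain C r where geo: "geo_stable p (Gam A B K') C r" using ms_stable_imp_geo_stable[OF p_nonneg assms] .
  let ?G = "Gam A B K'" and ?P = "PK p A B Q R K"
  define s where "s = init_qf (lyap_sum p ?G (stage_cost Q R K'))"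
  have sums: "mean_qf ?G (stage_cost Q R K') sums s" unfolding s_def by (rule mean_qf_sums[OF geo])
  hence "mjls_cost M x0 pini p A B Q R K' = ereal s"
    unfolding mjls_cost_eq_mean_qf by (simp add: sums_ereal sums_unique[symmetric])
  moreover have "init_qf ?P - (\<Sum>i\<in>UNIV. frob (grad_gram i) (XK M x0 pini p A B K' i)) \<le> s"
  proof (rule LIMSEQ_le)
    have "(\<lambda>N. init_qf ?P - mean_qf ?G ?P N - (\<Sum>t<N. mean_qf ?G grad_gram t))
      \<longlonglongrightarrow> init_qf ?P - 0 - (\<Sum>i\<in>UNIV. frob (grad_gram i) (XK M x0 pini p A B K' i))"
      using mean_qf_sums_XK[OF geo] unfolding sums_def
      by (intro tendsto_intros summable_LIMSEQ_zero[OF sums_summable[OF mean_qf_sums[OF geo]]])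
    thus "(\<lambda>N. init_qf ?P - mean_qf ?G ?P N - (\<Sum>t<N. mean_qf ?G grad_gram t))
      \<longlonglongrightarrow> init_qf ?P - (\<Sum>i\<in>UNIV. frob (grad_gram i) (XK M x0 pini p A B K' i))" by simp
    show "(\<lambda>N. \<Sum>t<N. mean_qf ?G (stage_cost Q R K') t) \<longlonglongrightarrow> s" using sums unfolding sums_def .
    have "mean_qf ?G (\<lambda>j. (-1) *\<^sub>R grad_gram j) t \<le> mean_qf ?G (advantage K') t" for t
      by (rule mean_qf_mono) (simp only: inner_scaleR_mv, simp add: advantage_qf_ge)
    hence "- mean_qf ?G grad_gram t \<le> mean_qf ?G (advantage K') t" for t
      by (simp only: mean_qf_scaleR) simp
    hence "(\<Sum>t<N. - mean_qf ?G grad_gram t) \<le> (\<Sum>t<N. mean_qf ?G (advantage K') t)" for N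
      by (rule sum_mono)
    thus "\<exists>N. \<forall>n\<ge>N. init_qf ?P - mean_qf ?G ?P n - (\<Sum>t<n. mean_qf ?G grad_gram t)
        \<le> (\<Sum>t<n. mean_qf ?G (stage_cost Q R K') t)"
      unfolding partial_cost_telescope by (simp add: sum_negf)
  qed
  ultimately show ?thesis by (rule that)
qed

(* The updated gain need not be stabilizing: only nonnegativity of the stage costs is used. *)
lemma mjls_cost_step_gain_le:
  assumes "0 \<le> eta" "eta \<le> 1"
  shows "mjls_cost M x0 pini p A B Q R (step_gain eta)
    \<le> ereal (init_qf (PK p A B Q R K) - 4 * eta * (1 - eta) * init_qf grad_gram)"
proof -
  let ?G = "Gam A B (step_gain eta)" and ?P = "PK p A B Q R K" and ?c = "4 * eta * (1 - eta)"
  have c: "0 \<le> ?c" using assms by simp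
  have D_nonneg: "0 \<le> mean_qf ?G grad_gram t" for t
    using psd_mat_grad_gram unfolding psd_mat_def by (intro mean_qf_nonneg) auto
  have "mean_qf ?G (advantage (step_gain eta)) t = mean_qf ?G (\<lambda>j. (- ?c) *\<^sub>R grad_gram j) t" for t
    by (rule mean_qf_qf_cong) (simp only: advantage_step_gain_qf inner_scaleR_mv)
  hence partial: "(\<Sum>t<N. mean_qf ?G (stage_cost Q R (step_gain eta)) t)
      = init_qf ?P - mean_qf ?G ?P N - ?c * (\<Sum>t<N. mean_qf ?G grad_gram t)" for N
    unfolding partial_cost_telescope by (simp only: mean_qf_scaleR) (simp add: sum_distrib_left sum_negf)
  have bound: "(\<Sum>t<N. mean_qf ?G (stage_cost Q R (step_gain eta)) t) \<le> init_qf ?P - ?c * init_qf grad_gram"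
    if "0 < N" for N
  proof -
    have "mean_qf ?G grad_gram 0 \<le> (\<Sum>t<N. mean_qf ?G grad_gram t)"
      using that by (intro member_le_sum D_nonneg) auto
    hence "?c * init_qf grad_gram \<le> ?c * (\<Sum>t<N. mean_qf ?G grad_gram t)"
      unfolding mean_qf_0 by (rule mult_left_mono[OF _ c])
    moreover have "0 \<le> mean_qf ?G ?P N" using PK_qf_nonneg by (intro mean_qf_nonneg)
    ultimately show ?thesis unfolding partial by linarith
  qed
  have stage_nonneg: "0 \<le> mean_qf ?G (stage_cost Q R (step_gain eta)) t" for t
    by (intro mean_qf_nonneg stage_cost_qf_nonneg)
  have "(\<Sum>t<N. mean_qf ?G (stage_cost Q R (step_gain eta)) t) \<le> init_qf ?P - ?c * init_qf grad_gram" for N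
  proof (cases "N = 0")
    case True
    thus ?thesis using bound[of 1] stage_nonneg[of 0] by simp
  qed (simp add: bound)
  thus ?thesis unfolding mjls_cost_eq_mean_qf
    by (intro suminf_bound) (simp_all add: stage_nonneg)
qed

end

lemma sum_frob_le_maxnorm_trace:
  fixes S X :: "'s::finite \<Rightarrow> real^'n^'n"
  assumes "\<And>i. sym_mat (S i)" "\<And>i. psd_mat (S i)"
  shows "(\<Sum>i\<in>UNIV. frob (S i) (X i)) \<le> maxnorm X * (\<Sum>i\<in>UNIV. frob (S i) (mat 1))"
  unfolding sum_distrib_left
proof (rule sum_mono)
  fix i
  have "frob (S i) (X i) \<le> specnorm (X i) * frob (S i) (mat 1)" by (rule frob_le_specnorm_trace[OF assms])
  also have "\<dots> \<le> maxnorm X * frob (S i) (mat 1)"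
    by (rule mult_right_mono[OF specnorm_le_maxnorm frob_psd_mat_nonneg[OF assms]])
  finally show "frob (S i) (X i) \<le> maxnorm X * frob (S i) (mat 1)" .
qed

lemma (in mjls) mu_const_nonneg:
  assumes "posdef (second_moment M x0)"
  shows "0 \<le> mu_const M x0 pini"
proof -
  have "0 \<le> Min (range pini)" using Min_in[of "range pini"] pini_nonneg by auto
  thus ?thesis unfolding mu_const_def by (intro mult_nonneg_nonneg sigma_min_le_qf(1)[OF assms])
qed

lemma (in mjls) mu_const_trace_le_init_qf:
  assumes "posdef (second_moment M x0)" "\<And>i. sym_mat (S i)" "\<And>i. psd_mat (S i)"
  shows "mu_const M x0 pini * (\<Sum>i\<in>UNIV. frob (S i) (mat 1)) \<le> init_qf S"
  unfolding mu_const_def init_qf_def sum_distrib_left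
proof (rule sum_mono)
  fix i
  let ?sig = "sigma_min (second_moment M x0)"
  have "Min (range pini) \<le> pini i" by (rule Min_le) auto
  hence "Min (range pini) * (?sig * frob (S i) (mat 1)) \<le> pini i * (?sig * frob (S i) (mat 1))"
    using sigma_min_le_qf(1)[OF assms(1)] frob_psd_mat_nonneg[OF assms(2,3)]
    by (intro mult_right_mono) simp_all
  also have "\<dots> \<le> pini i * frob (S i) (second_moment M x0)"
    by (intro mult_left_mono pini_nonneg sigma_min_trace_le_frob assms)
  finally show "Min (range pini) * ?sig * frob (S i) (mat 1) \<le> pini i * frob (S i) (second_moment M x0)"
    by (simp add: mult_ac)
qed

lemma (in mjls_gain) mjls_cost_gap_le_trace:
  assumes "ms_stable p (Gam A B K')"
  obtains s where "mjls_cost M x0 pini p A B Q R K' = ereal s"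
    "init_qf (PK p A B Q R K) - s \<le> maxnorm (XK M x0 pini p A B K') * (\<Sum>i\<in>UNIV. frob (grad_gram i) (mat 1))"
proof -
  obtain s where "mjls_cost M x0 pini p A B Q R K' = ereal s"
    and "init_qf (PK p A B Q R K) - (\<Sum>i\<in>UNIV. frob (grad_gram i) (XK M x0 pini p A B K' i)) \<le> s"
    using mjls_cost_ge[OF assms] .
  moreover have "(\<Sum>i\<in>UNIV. frob (grad_gram i) (XK M x0 pini p A B K' i))
      \<le> maxnorm (XK M x0 pini p A B K') * (\<Sum>i\<in>UNIV. frob (grad_gram i) (mat 1))"
    by (intro sum_frob_le_maxnorm_trace sym_mat_grad_gram psd_mat_grad_gram)
  ultimately show ?thesis using that by simp
qed

(* For mx = 0 the factor is 1, since division by zero yields 0. *)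
lemma contraction_estimate:
  fixes a s g T mx mu eta :: real
  assumes "a - s \<le> mx * T" "mu * T \<le> g" "0 \<le> T" "0 \<le> mu" "0 \<le> mx" "0 < eta" "eta \<le> 1/2"
  shows "a - 4 * eta * (1 - eta) * g - s \<le> (1 - 2 * mu / mx * eta) * (a - s)"
proof -
  have "0 \<le> g" using assms(2-4) by (meson mult_nonneg_nonneg order_trans)
  have "0 \<le> 2 * eta * (1 - 2 * eta)" using assms(6,7) by simp
  hence "2 * eta \<le> 4 * eta * (1 - eta)" by (simp add: algebra_simps)
  hence "2 * eta * g \<le> 4 * eta * (1 - eta) * g" using \<open>0 \<le> g\<close> by (rule mult_right_mono)
  moreover have "2 * eta * (mu * T) \<le> 2 * eta * g" using assms(2,6) by simp
  ultimately have "2 * eta * (mu * T) \<le> 4 * eta * (1 - eta) * g" by linarith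
  moreover have "2 * mu / mx * eta * (a - s) \<le> 2 * eta * (mu * T)"
  proof (cases "mx = 0")
    case False
    hence "(a - s) / mx \<le> T" using assms(1,5) by (simp add: divide_le_eq mult.commute)
    hence "2 * mu * eta * ((a - s) / mx) \<le> 2 * mu * eta * T" using assms(4,6) by (intro mult_left_mono) auto
    thus ?thesis by (simp add: mult_ac)
  qed (use assms(3,4,6) in simp)
  ultimately show ?thesis by (simp add: algebra_simps)
qed

lemma ereal_diff_le_scaled_diff:
  assumes "x \<le> ereal b" "b - s \<le> c * (a - s)"
  shows "x - ereal s \<le> ereal c * (ereal a - ereal s)"
proof -
  have "x - ereal s \<le> ereal b - ereal s" by (rule ereal_minus_mono[OF assms(1) order_refl])
  also have "\<dots> \<le> ereal (c * (a - s))" using assms(2) by simp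
  finally show ?thesis by simp
qed

theorem lemma7:
  fixes M :: "'a measure" and x0 :: "'a \<Rightarrow> real^'d"
    and pini :: "'s::finite \<Rightarrow> real" and p :: "'s \<Rightarrow> 's \<Rightarrow> real"
    and A :: "'s \<Rightarrow> real^'d^'d" and B :: "'s \<Rightarrow> real^'k^'d"
    and Q :: "'s \<Rightarrow> real^'d^'d" and R :: "'s \<Rightarrow> real^'k^'k"
    and K Kstar :: "'s \<Rightarrow> real^'d^'k" and eta :: real
  assumes M: "prob_space M"
    and x0_meas: "x0 \<in> borel_measurable M"
    and x0_sq: "\<And>j. integrable M (\<lambda>w. (x0 w $ j)\<^sup>2)"
    and x0_pd: "posdef (second_moment M x0)"
    and p_nonneg: "\<And>i j. p i j \<ge> 0" and p_stoch: "\<And>i. (\<Sum>j\<in>UNIV. p i j) = 1"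
    and pi_pos: "\<And>i. pini i > 0" and pi_sum: "(\<Sum>i\<in>UNIV. pini i) = 1"
    and stabilizable: "stab_set p A B \<noteq> {}"
    and Q_pd: "\<And>i. posdef (Q i)" and R_pd: "\<And>i. posdef (R i)"
    and Kstar_stab: "Kstar \<in> stab_set p A B"
    and Kstar_opt: "\<And>K'. K' \<in> stab_set p A B \<Longrightarrow>
                      mjls_cost M x0 pini p A B Q R Kstar \<le> mjls_cost M x0 pini p A B Q R K'"
    and K_stab: "K \<in> stab_set p A B"
    and eta: "0 < eta" "eta \<le> 1/2"
  shows "mjls_cost M x0 pini p A B Q R
           (\<lambda>i. K i - (2 * eta) *\<^sub>R (matrix_inv (R i + transpose (B i) ** Eop p (PK p A B Q R K) i ** B i)
                                      ** LK p A B Q R K i))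
         - mjls_cost M x0 pini p A B Q R Kstar
       \<le> ereal (1 - 2 * mu_const M x0 pini / maxnorm (XK M x0 pini p A B Kstar) * eta)
         * (mjls_cost M x0 pini p A B Q R K - mjls_cost M x0 pini p A B Q R Kstar)"
proof -
  interpret mjls_gain M x0 pini p A B Q R K
    using x0_meas x0_sq p_nonneg pi_pos Q_pd R_pd K_stab
    by unfold_locales (auto simp: stab_set_def less_imp_le)
  let ?T = "\<Sum>i\<in>UNIV. frob (grad_gram i) (mat 1)"
  obtain s where cost_Kstar: "mjls_cost M x0 pini p A B Q R Kstar = ereal s"
    and gap: "init_qf (PK p A B Q R K) - s \<le> maxnorm (XK M x0 pini p A B Kstar) * ?T"
    using mjls_cost_gap_le_trace[of Kstar] Kstar_stab unfolding stab_set_def by blast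
  have "0 \<le> ?T" by (intro sum_nonneg frob_psd_mat_nonneg sym_mat_grad_gram psd_mat_grad_gram)
  with gap mu_const_trace_le_init_qf[OF x0_pd sym_mat_grad_gram psd_mat_grad_gram]
  have contraction: "init_qf (PK p A B Q R K) - 4 * eta * (1 - eta) * init_qf grad_gram - s
      \<le> (1 - 2 * mu_const M x0 pini / maxnorm (XK M x0 pini p A B Kstar) * eta) * (init_qf (PK p A B Q R K) - s)"
    using mu_const_nonneg[OF x0_pd] maxnorm_nonneg eta by (intro contraction_estimate)
  have cost_step: "mjls_cost M x0 pini p A B Q R (step_gain eta)
      \<le> ereal (init_qf (PK p A B Q R K) - 4 * eta * (1 - eta) * init_qf grad_gram)"
    using eta by (intro mjls_cost_step_gain_le) auto
  have step_eq: "(\<lambda>i. K i - (2 * eta) *\<^sub>R (matrix_inv (R i + transpose (B i) ** Eop p (PK p A B Q R K) i ** B i)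
      ** LK p A B Q R K i)) = step_gain eta"
    unfolding step_gain_def[abs_def] Psi_def ..
  show ?thesis
    unfolding step_eq cost_Kstar mjls_cost_K by (rule ereal_diff_le_scaled_diff[OF cost_step contraction])
qed

end
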